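(* Let $A\in\mathscr R$ be fixed and let $\mathbf Z^{(1)},\dots,\mathbf Z^{(n+m)}$ be independent $[0,\infty)^d$-valued random vectors with distributions $V_1,\dots,V_{n+m}$. Suppose $V_1,\dots,V_n\in\mathcal A_A$, $V_i(xA)\asymp V_1(xA)$ for $i=2,\dots,n$, and $V_j(xA)=o[V_1(xA)]$ for $j=n+1,\dots,n+m$. Let $b\in(0,\infty)$, $\mathbf c_n=(c_1,\dots,c_n)^\top\in(0,b]^n$ and $(c_{n+1},\dots,c_{n+m})\in[0,b]^m$ such that for each $j\in\{n+1,\dots,n+m\}$ there exists $i_j\in\{1,\dots,n\}$ with $c_j\le c_{i_j}$. Then $$\lim_{x\to\infty}\sup_{\mathbf c_n\in(0,b]^n}\left|\frac{\mathbf P\big(\sum_{i=1}^{n+m}c_i\mathbf Z^{(i)}\in xA\big)}{\sum_{i=1}^n\mathbf P(c_i\mathbf Z^{(i)}\in xA)}-1\right|=0.$$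
   Context: $\mathscr R$: open, increasing ($\mathbf z\in A,\mathbf y\in[0,\infty)^d\Rightarrow\mathbf z+\mathbf y\in A$) sets $A\subsetneq\mathbb R^d$ with convex complement and $\mathbf 0\notin\overline A$. For $V$ on $[0,\infty)^d$, $\mathbf Z\sim V$: $V(xA)=\mathbf P(\mathbf Z\in xA)$, $V_A$ the distribution of $\sup\{u:\mathbf Z\in uA\}$. One-dimensional $B$ (infinite right endpoint) is in $\mathcal P_{\mathcal D}$ if $\limsup_x\overline B(vx)/\overline B(x)<1$ for some (equivalently all) $v>1$; $\mathcal A=\mathcal S\cap\mathcal P_{\mathcal D}$ with $\mathcal S$ the subexponential class. $V\in\mathcal A_A$ iff $V_A\in\mathcal A$. $f\asymp g$: $f=O(g)$ and $g=O(f)$. *)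

theory Defs
  imports "HOL-Probability.Probability" "HOL-Library.Landau_Symbols"
begin

definition classR :: "(real ^ 'd) set \<Rightarrow> bool" where
  "classR A \<longleftrightarrow> open A
     \<and> (\<forall>z\<in>A. \<forall>y. (\<forall>k. 0 \<le> y $ k) \<longrightarrow> z + y \<in> A)
     \<and> A \<noteq> UNIV
     \<and> convex (UNIV - A)
     \<and> 0 \<notin> closure A"

definition dil :: "real \<Rightarrow> (real ^ 'd) set \<Rightarrow> (real ^ 'd) set" where
  "dil x A = (\<lambda>z. x *\<^sub>R z) ` A"

definition supA :: "(real ^ 'd) set \<Rightarrow> real ^ 'd \<Rightarrow> real" where
  "supA A z = (if {u. 0 < u \<and> z \<in> dil u A} = {} then 0
               else Sup {u. 0 < u \<and> z \<in> dil u A})"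

definition distA :: "(real ^ 'd) set \<Rightarrow> (real ^ 'd) measure \<Rightarrow> real measure" where
  "distA A V = distr V borel (supA A)"

definition tail :: "real measure \<Rightarrow> real \<Rightarrow> real" where
  "tail B x = measure B {x<..}"

definition subexp :: "real measure \<Rightarrow> bool" where
  "subexp B \<longleftrightarrow> prob_space B \<and> sets B = sets borel \<and> emeasure B {..<0} = 0
     \<and> (\<forall>x. 0 < tail B x)
     \<and> ((\<lambda>x. tail (B \<star> B) x / tail B x) \<longlongrightarrow> 2) at_top"

definition PD :: "real measure \<Rightarrow> bool" where
  "PD B \<longleftrightarrow> (\<forall>x. 0 < tail B x)
     \<and> (\<exists>v>1. Limsup at_top (\<lambda>x. ereal (tail B (v * x) / tail B x)) < 1)"

definition classA :: "real measure \<Rightarrow> bool" where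
  "classA B \<longleftrightarrow> subexp B \<and> PD B"

definition classAA :: "(real ^ 'd) set \<Rightarrow> (real ^ 'd) measure \<Rightarrow> bool" where
  "classAA A V \<longleftrightarrow> classA (distA A V)"

end

theory Submission
  imports Defs
begin

text \<open>Each vector is replaced by its gauge sup{u. z \<in> uA}. The gauge turns the event c Z \<in> xA into a
  tail event of a real random variable, and it is positively homogeneous and subadditive because the
  complement of A is convex. Hence the event that the weighted vector sum lies in xA is contained in the
  event that the weighted sum of gauges exceeds x, whose probability is bounded, uniformly in the
  weights, by (1 + \<epsilon>) times the sum of the individual heavy tails plus a negligible term; this
  one-dimensional bound is proved by induction over the summands from subexponentiality, the long-tail
  property and the P_D condition. Conversely, since A is increasing and the vectors are nonnegative, the
  event contains the union of the events that a single heavy summand lies in xA, and by independence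
  the Bonferroni inequality gives the matching lower bound.\<close>

section \<open>The gauge of a set in class R\<close>

lemma mem_dil_iff: "0 < x \<Longrightarrow> z \<in> dil x A \<longleftrightarrow> (1 / x) *\<^sub>R z \<in> A"
  unfolding dil_def by (auto intro: image_eqI[where x = "(1 / x) *\<^sub>R z"])

lemma scaleR_mem_dil_iff: "0 < x \<Longrightarrow> 0 < c \<Longrightarrow> c *\<^sub>R z \<in> dil x A \<longleftrightarrow> z \<in> dil (x / c) A"
  by (simp add: mem_dil_iff)

lemma nonneg_real_eqI:
  fixes a b :: real
  assumes "0 \<le> a" "0 \<le> b" and less_iff: "\<And>x. 0 < x \<Longrightarrow> x < a \<longleftrightarrow> x < b"
  shows "a = b"
proof (rule ccontr)
  assume "a \<noteq> b"
  then show False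
    using less_iff[of "(a + b) / 2"] assms(1,2) by (cases "a < b") auto
qed

locale classR_set =
  fixes A :: "(real ^ 'd) set"
  assumes classR: "classR A"
begin

lemma open_A: "open A"
  and A_add_nonneg: "z \<in> A \<Longrightarrow> \<forall>k. 0 \<le> y $ k \<Longrightarrow> z + y \<in> A"
  and convex_compl_A: "convex (UNIV - A)"
  and zero_notin_closure_A: "0 \<notin> closure A"
  using classR unfolding classR_def by auto

lemma zero_notin_A: "0 \<notin> A"
  using zero_notin_closure_A closure_subset by auto

lemma scaleR_mem_A:
  assumes "z \<in> A" and "1 \<le> t"
  shows "t *\<^sub>R z \<in> A"
proof (rule ccontr)
  assume "t *\<^sub>R z \<notin> A"
  then have "(1 / t) *\<^sub>R (t *\<^sub>R z) + (1 - 1 / t) *\<^sub>R 0 \<in> UNIV - A"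
    using zero_notin_A \<open>1 \<le> t\<close> by (intro convex_compl_A[unfolded convex_def, rule_format]) auto
  then show False
    using assms by simp
qed

lemma A_norm_bounded_below: obtains r where "0 < r" "\<And>z. z \<in> A \<Longrightarrow> r \<le> norm z"
proof -
  from zero_notin_closure_A obtain r where "0 < r" "\<forall>z\<in>A. \<not> dist z 0 < r"
    unfolding closure_approachable by auto
  then show thesis
    by (intro that[of r]) (auto simp: dist_norm not_less)
qed

lemma open_dil: "0 < x \<Longrightarrow> open (dil x A)"
  unfolding dil_def by (intro open_scaling open_A) simp

lemma dil_add_nonneg:
  assumes "0 < x" "z \<in> dil x A" "\<forall>k. 0 \<le> y $ k"
  shows "z + y \<in> dil x A"
proof -
  have "(1 / x) *\<^sub>R z + (1 / x) *\<^sub>R y \<in> A"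
    using assms by (intro A_add_nonneg) (auto simp: mem_dil_iff)
  then show ?thesis
    using assms(1) by (simp add: mem_dil_iff scaleR_add_right)
qed

text \<open>The scales u for which z lies in uA form an open interval (0, supA A z), because A is open
  and star-shaped with respect to infinity and bounded away from the origin.\<close>

definition scales :: "real ^ 'd \<Rightarrow> real set" where
  "scales z = {u. 0 < u \<and> z \<in> dil u A}"

lemma supA_eq_scales: "supA A z = (if scales z = {} then 0 else Sup (scales z))"
  unfolding supA_def scales_def ..

lemma bdd_above_scales: "bdd_above (scales z)"
proof -
  obtain r where r: "0 < r" "\<And>z. z \<in> A \<Longrightarrow> r \<le> norm z"
    using A_norm_bounded_below by blast
  have "u \<le> norm z / r" if "u \<in> scales z" for u
  proof -
    have u: "0 < u" "(1 / u) *\<^sub>R z \<in> A"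
      using that by (auto simp: scales_def mem_dil_iff)
    then have "r \<le> norm z / u"
      using r(2)[OF u(2)] by simp
    then show ?thesis
      using u r by (simp add: field_simps)
  qed
  then show ?thesis
    unfolding bdd_above_def by blast
qed

lemma scales_downward_closed: "u \<in> scales z \<Longrightarrow> 0 < u' \<Longrightarrow> u' \<le> u \<Longrightarrow> u' \<in> scales z"
  using scaleR_mem_A[of "(1 / u) *\<^sub>R z" "u / u'"] by (auto simp: scales_def mem_dil_iff)

lemma scales_no_max:
  assumes "u \<in> scales z"
  obtains u' where "u' \<in> scales z" "u < u'"
proof -
  define T where "T = {0<..} \<inter> (\<lambda>s. (1 / s) *\<^sub>R z) -` A"
  have "open T"
    unfolding T_def by (intro continuous_open_preimage open_A continuous_intros) auto
  moreover have "u \<in> T"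
    using assms by (auto simp: T_def scales_def mem_dil_iff)
  ultimately obtain e where e: "0 < e" "ball u e \<subseteq> T"
    by (auto simp: open_contains_ball)
  then have "u + e / 2 \<in> T"
    by (intro subsetD[OF e(2)]) (auto simp: dist_real_def)
  then show thesis
    using e(1) by (intro that[of "u + e / 2"]) (auto simp: T_def scales_def mem_dil_iff)
qed

lemma supA_nonneg: "0 \<le> supA A z"
proof (cases "scales z = {}")
  case False
  then obtain u where "u \<in> scales z"
    by auto
  then have "0 < u" "u \<le> Sup (scales z)"
    using cSup_upper[OF _ bdd_above_scales] by (auto simp: scales_def)
  then show ?thesis
    using False by (simp add: supA_eq_scales)
qed (simp add: supA_eq_scales)

lemma mem_dil_iff_less_supA:
  assumes "0 < x"
  shows "z \<in> dil x A \<longleftrightarrow> x < supA A z"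
proof
  assume "z \<in> dil x A"
  then have "x \<in> scales z"
    using assms by (simp add: scales_def)
  moreover obtain u where "u \<in> scales z" "x < u"
    using scales_no_max[OF \<open>x \<in> scales z\<close>] by blast
  ultimately show "x < supA A z"
    using cSup_upper[OF _ bdd_above_scales, of u z] by (auto simp: supA_eq_scales)
next
  assume less: "x < supA A z"
  then have "scales z \<noteq> {}"
    using assms by (auto simp: supA_eq_scales)
  with less obtain u where "u \<in> scales z" "x < u"
    by (auto simp: supA_eq_scales less_cSup_iff[OF _ bdd_above_scales])
  then show "z \<in> dil x A"
    using assms scales_downward_closed[of u z x] by (simp add: scales_def)
qed

lemma supA_zero: "supA A 0 = 0"
proof -
  have "\<not> x < supA A 0" if "0 < x" for x
    using that zero_notin_A by (simp add: mem_dil_iff_less_supA[symmetric] mem_dil_iff)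
  then show ?thesis
    using supA_nonneg[of 0] by (metis field_sum_of_halves half_gt_zero_iff less_add_same_cancel1
        order_le_less)
qed

lemma supA_scaleR:
  assumes "0 \<le> c"
  shows "supA A (c *\<^sub>R z) = c * supA A z"
proof (cases "c = 0")
  case True
  then show ?thesis
    by (simp add: supA_zero)
next
  case False
  with assms have c: "0 < c"
    by simp
  show ?thesis
  proof (rule nonneg_real_eqI)
    fix x :: real
    assume x: "0 < x"
    have "x < supA A (c *\<^sub>R z) \<longleftrightarrow> x / c < supA A z"
      using x c by (simp add: mem_dil_iff_less_supA[symmetric] scaleR_mem_dil_iff)
    also have "\<dots> \<longleftrightarrow> x < c * supA A z"
      using c by (simp add: divide_less_eq mult.commute)
    finally show "x < supA A (c *\<^sub>R z) \<longleftrightarrow> x < c * supA A z" .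
  qed (use c supA_nonneg in auto)
qed

lemma supA_add_le: "supA A (z1 + z2) \<le> supA A z1 + supA A z2"
proof (rule ccontr)
  assume "\<not> ?thesis"
  then have less: "supA A z1 + supA A z2 < supA A (z1 + z2)"
    by simp
  define d where "d = (supA A (z1 + z2) - supA A z1 - supA A z2) / 3"
  define a where "a = supA A z1 + d"
  define b where "b = supA A z2 + d"
  have "0 < d"
    using less by (simp add: d_def)
  then have a: "0 < a" and b: "0 < b"
    using supA_nonneg[of z1] supA_nonneg[of z2] by (auto simp: a_def b_def)
  have out1: "(1 / a) *\<^sub>R z1 \<in> UNIV - A"
    using mem_dil_iff_less_supA[OF a, of z1] \<open>0 < d\<close> a by (simp add: mem_dil_iff a_def)
  have out2: "(1 / b) *\<^sub>R z2 \<in> UNIV - A"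
    using mem_dil_iff_less_supA[OF b, of z2] \<open>0 < d\<close> b by (simp add: mem_dil_iff b_def)
  have "a + b < supA A (z1 + z2)"
    using less by (simp add: a_def b_def d_def field_simps)
  then have "(1 / (a + b)) *\<^sub>R (z1 + z2) \<in> A"
    using a b mem_dil_iff_less_supA[of "a + b"] by (simp add: mem_dil_iff)
  moreover have "(a / (a + b)) *\<^sub>R ((1 / a) *\<^sub>R z1) + (b / (a + b)) *\<^sub>R ((1 / b) *\<^sub>R z2) \<in> UNIV - A"
    using a b out1 out2
    by (intro convex_compl_A[unfolded convex_def, rule_format]) (auto simp: add_divide_distrib[symmetric])
  ultimately show False
    using a b by (simp add: scaleR_add_right)
qed

lemma supA_sum_le:
  "finite I \<Longrightarrow> (\<And>l. l \<in> I \<Longrightarrow> 0 \<le> c l) \<Longrightarrow>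
    supA A (\<Sum>l\<in>I. c l *\<^sub>R z l) \<le> (\<Sum>l\<in>I. c l * supA A (z l))"
proof (induction I rule: finite_induct)
  case (insert k I)
  then have "supA A (\<Sum>l\<in>insert k I. c l *\<^sub>R z l)
      \<le> supA A (c k *\<^sub>R z k) + supA A (\<Sum>l\<in>I. c l *\<^sub>R z l)"
    using supA_add_le by simp
  with insert show ?case
    by (simp add: supA_scaleR)
qed (simp add: supA_zero)

lemma borel_measurable_supA[measurable]: "supA A \<in> borel_measurable borel"
proof (rule borel_measurable_iff_greater[THEN iffD2], intro allI)
  fix a :: real
  have "{z. a < supA A z} = dil a A" if "0 < a"
    using mem_dil_iff_less_supA[OF that] by auto
  moreover have "{z. 0 < supA A z} = (\<Union>x\<in>{0<..}. dil x A)"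
  proof safe
    fix z
    assume "0 < supA A z"
    then show "z \<in> (\<Union>x\<in>{0<..}. dil x A)"
      using mem_dil_iff_less_supA[of "supA A z / 2" z] by auto
  qed (auto simp: mem_dil_iff_less_supA)
  moreover have "{z. a < supA A z} = UNIV" if "a < 0"
    using that supA_nonneg by (auto intro: less_le_trans)
  ultimately show "{z \<in> space borel. a < supA A z} \<in> sets borel"
    using open_dil by (cases a "0::real" rule: linorder_cases) (auto intro!: borel_open)
qed

end

section \<open>Tails of distributions in class A\<close>

lemma tail_nonneg: "0 \<le> tail B x"
  by (simp add: tail_def)

lemma measure_pair_measure_Times:
  assumes "prob_space P" "prob_space Q" "S \<in> sets P" "T \<in> sets Q"
  shows "measure (P \<Otimes>\<^sub>M Q) (S \<times> T) = measure P S * measure Q T"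
proof -
  interpret Q: prob_space Q
    by fact
  have "emeasure (P \<Otimes>\<^sub>M Q) (S \<times> T) = emeasure P S * emeasure Q T"
    using assms by (intro Q.emeasure_pair_measure_Times) (auto intro: prob_space_imp_sigma_finite)
  then show ?thesis
    by (simp add: measure_def enn2real_mult)
qed

lemma (in finite_measure) measure_disjoint3_le:
  assumes "E1 \<in> sets M" "E2 \<in> sets M" "E3 \<in> sets M" "F \<in> sets M"
    and "E1 \<inter> E2 = {}" "E1 \<inter> E3 = {}" "E2 \<inter> E3 = {}" "E1 \<union> E2 \<union> E3 \<subseteq> F"
  shows "measure M E1 + measure M E2 + measure M E3 \<le> measure M F"
proof -
  have "measure M E1 + measure M E2 + measure M E3 = measure M (E1 \<union> E2 \<union> E3)"
    using assms by (simp add: finite_measure_Union Int_Un_distrib2)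
  also have "\<dots> \<le> measure M F"
    using assms by (intro finite_measure_mono) auto
  finally show ?thesis .
qed

definition joint_excess :: "real \<Rightarrow> real \<Rightarrow> (real \<times> real) set" where
  "joint_excess h y = {p. h < fst p \<and> h < snd p \<and> y < fst p + snd p}"

lemma joint_excess_sets[measurable]: "joint_excess h y \<in> sets (borel \<Otimes>\<^sub>M borel)"
proof -
  have "Measurable.pred (borel \<Otimes>\<^sub>M borel) (\<lambda>p::real \<times> real. h < fst p \<and> h < snd p \<and> y < fst p + snd p)"
    by measurable
  then show ?thesis
    by (simp add: pred_def space_pair_measure joint_excess_def)
qed

locale classA_distr =
  fixes B :: "real measure"
  assumes classA: "classA B"
begin

lemma prob_space_B: "prob_space B"
  and sets_B[measurable_cong, simp]: "sets B = sets borel"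
  and emeasure_negative: "emeasure B {..<0} = 0"
  and tail_pos: "0 < tail B x"
  and tail_conv_ratio: "((\<lambda>x. tail (B \<star> B) x / tail B x) \<longlongrightarrow> 2) at_top"
  and PD_B: "PD B"
  using classA unfolding classA_def subexp_def by auto

interpretation B: prob_space B
  by (rule prob_space_B)

interpretation BB: pair_prob_space B B
  by unfold_locales

lemma space_B[simp]: "space B = UNIV"
  using sets_eq_imp_space_eq[OF sets_B] by simp

lemma sets_BB[measurable_cong]: "sets (B \<Otimes>\<^sub>M B) = sets (borel \<Otimes>\<^sub>M borel)"
  by (intro sets_pair_measure_cong) auto

lemma tail_mono: "x \<le> y \<Longrightarrow> tail B y \<le> tail B x"
  unfolding tail_def by (intro B.finite_measure_mono) auto

lemma measure_atLeast_0: "measure B {0..} = 1"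
proof -
  have "measure B {..<0} = 0"
    using emeasure_negative by (simp add: measure_def)
  moreover have "measure B {0..} = 1 - measure B {..<0}"
    by (subst B.prob_compl[symmetric]) (auto intro!: arg_cong[where f = "measure B"])
  ultimately show ?thesis
    by simp
qed

lemma measure_Icc_0:
  assumes "0 \<le> h"
  shows "measure B {0..h} = 1 - tail B h"
proof -
  have "measure B {0..} = measure B {0..h} + measure B {h<..}"
    using assms by (subst B.finite_measure_Union[symmetric]) (auto intro!: arg_cong[where f = "measure B"])
  then show ?thesis
    using measure_atLeast_0 by (simp add: tail_def)
qed

lemma measure_Ioc:
  assumes "h \<le> y"
  shows "measure B {h<..y} = tail B h - tail B y"
proof -
  have "measure B {h<..} = measure B {h<..y} + measure B {y<..}"
    using assms by (subst B.finite_measure_Union[symmetric]) (auto intro!: arg_cong[where f = "measure B"])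
  then show ?thesis
    by (simp add: tail_def)
qed

lemma tail_conv: "tail (B \<star> B) y = measure (B \<Otimes>\<^sub>M B) {p. y < fst p + snd p}"
  unfolding tail_def convolution_def
  by (subst measure_distr) (auto simp: space_pair_measure intro!: arg_cong[where f = "measure (B \<Otimes>\<^sub>M B)"])

lemma sum_gt_sets[measurable]: "{p. y < fst p + snd p} \<in> sets (B \<Otimes>\<^sub>M B)"
proof -
  have "Measurable.pred (B \<Otimes>\<^sub>M B) (\<lambda>p. y < fst p + snd p)"
    by measurable
  then show ?thesis
    by (simp add: pred_def space_pair_measure)
qed

lemma tail_conv_ge_disjoint3:
  assumes "E1 \<union> E2 \<union> E3 \<subseteq> {p. y < fst p + snd p}"
    and "E1 \<inter> E2 = {}" "E1 \<inter> E3 = {}" "E2 \<inter> E3 = {}"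
    and "E1 \<in> sets (B \<Otimes>\<^sub>M B)" "E2 \<in> sets (B \<Otimes>\<^sub>M B)" "E3 \<in> sets (B \<Otimes>\<^sub>M B)"
  shows "measure (B \<Otimes>\<^sub>M B) E1 + measure (B \<Otimes>\<^sub>M B) E2 + measure (B \<Otimes>\<^sub>M B) E3 \<le> tail (B \<star> B) y"
  unfolding tail_conv using assms sum_gt_sets by (intro BB.P.measure_disjoint3_le) auto

text \<open>Compared with tail (B * B) y \<sim> 2 tail B y, the next two bounds control the region where both
  summands exceed h and the ratio tail B (y - h) / tail B y.\<close>

lemma tail_conv_lower_joint:
  assumes "0 \<le> h" "2 * h < y"
  shows "2 * tail B y * (1 - tail B h) + measure (B \<Otimes>\<^sub>M B) (joint_excess h y) \<le> tail (B \<star> B) y"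
proof -
  have "measure (B \<Otimes>\<^sub>M B) ({y<..} \<times> {0..h}) + measure (B \<Otimes>\<^sub>M B) ({0..h} \<times> {y<..})
      + measure (B \<Otimes>\<^sub>M B) (joint_excess h y) \<le> tail (B \<star> B) y"
    using assms joint_excess_sets[of h y] by (intro tail_conv_ge_disjoint3) (auto simp: joint_excess_def)
  then show ?thesis
    using assms by (simp add: measure_pair_measure_Times prob_space_B measure_Icc_0 flip: tail_def)
qed

lemma tail_conv_lower_shift:
  assumes "0 \<le> h" "h \<le> y"
  shows "tail B y + tail B y * (1 - tail B h) + tail B (y - h) * (tail B h - tail B y) \<le> tail (B \<star> B) y"
proof -
  have "measure (B \<Otimes>\<^sub>M B) ({0..} \<times> {y<..}) + measure (B \<Otimes>\<^sub>M B) ({y<..} \<times> {0..h})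
      + measure (B \<Otimes>\<^sub>M B) ({y - h<..} \<times> {h<..y}) \<le> tail (B \<star> B) y"
    using assms by (intro tail_conv_ge_disjoint3) auto
  then show ?thesis
    using assms
    by (simp add: measure_pair_measure_Times prob_space_B measure_atLeast_0 measure_Icc_0 measure_Ioc
        flip: tail_def)
qed

lemma tail_PD_bound:
  obtains v \<gamma> x0 where "1 < v" "0 < \<gamma>" "\<gamma> < 1" "0 < x0"
    "\<And>x. x0 \<le> x \<Longrightarrow> tail B (v * x) \<le> \<gamma> * tail B x"
proof -
  from PD_B obtain v where v: "1 < v"
    and "Limsup at_top (\<lambda>x. ereal (tail B (v * x) / tail B x)) < 1"
    unfolding PD_def by auto
  then obtain \<gamma> where "Limsup at_top (\<lambda>x. ereal (tail B (v * x) / tail B x)) < ereal \<gamma>" "\<gamma> < 1"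
    using ereal_dense2 by fastforce
  then obtain x1 where x1: "\<And>x. x1 \<le> x \<Longrightarrow> tail B (v * x) / tail B x < \<gamma>" "\<gamma> < 1"
    using Limsup_lessD by (fastforce simp: eventually_at_top_linorder)
  define x0 where "x0 = max x1 1"
  have bound: "tail B (v * x) \<le> \<gamma> * tail B x" if "x0 \<le> x" for x
    using x1(1)[of x] that tail_pos[of x] by (simp add: x0_def divide_less_eq)
  have "0 < \<gamma> * tail B x0"
    using bound[of x0] tail_pos[of "v * x0"] by simp
  then have "0 < \<gamma>"
    using tail_pos[of x0] by (simp add: zero_less_mult_iff)
  moreover have "0 < x0"
    by (simp add: x0_def)
  ultimately show thesis
    using that v x1(2) bound by blast
qed

lemma tail_power_bound:
  assumes "1 < v" "0 < \<gamma>" "0 < x0" "\<And>x. x0 \<le> x \<Longrightarrow> tail B (v * x) \<le> \<gamma> * tail B x"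
    and "x0 \<le> x"
  shows "tail B (v ^ k * x) \<le> \<gamma> ^ k * tail B x"
proof (induction k)
  case (Suc k)
  have "x \<le> v ^ k * x"
    using assms by (simp add: mult_le_cancel_right1)
  then have "tail B (v * (v ^ k * x)) \<le> \<gamma> * tail B (v ^ k * x)"
    using assms(5) by (intro assms(4)) linarith
  also have "\<dots> \<le> \<gamma> * (\<gamma> ^ k * tail B x)"
    using Suc assms(2) by (intro mult_left_mono) auto
  finally show ?case
    by (simp add: mult.assoc)
qed simp

lemma tail_rescaled_small:
  obtains x0 where "0 < x0"
    "\<And>\<delta>. 0 < \<delta> \<Longrightarrow> \<exists>\<eta>>0. \<forall>x\<ge>x0. \<forall>w. 0 < w \<and> w \<le> \<eta> \<longrightarrow> tail B (x / w) \<le> \<delta> * tail B x"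
proof -
  obtain v \<gamma> x0 where v: "1 < v" "0 < \<gamma>" "\<gamma> < 1" "0 < x0"
    and bound: "\<And>x. x0 \<le> x \<Longrightarrow> tail B (v * x) \<le> \<gamma> * tail B x"
    using tail_PD_bound by blast
  have "\<exists>\<eta>>0. \<forall>x\<ge>x0. \<forall>w. 0 < w \<and> w \<le> \<eta> \<longrightarrow> tail B (x / w) \<le> \<delta> * tail B x" if "0 < \<delta>" for \<delta>
  proof -
    obtain k where k: "\<gamma> ^ k < \<delta>"
      using real_arch_pow_inv[OF \<open>0 < \<delta>\<close> v(3)] by blast
    have "tail B (x / w) \<le> \<delta> * tail B x" if "x0 \<le> x" "0 < w" "w \<le> 1 / v ^ k" for x w
    proof -
      have "v ^ k * x \<le> x / w"
        using that v by (auto simp: field_simps)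
      then have "tail B (x / w) \<le> tail B (v ^ k * x)"
        by (rule tail_mono)
      also have "\<dots> \<le> \<gamma> ^ k * tail B x"
        by (rule tail_power_bound[OF v(1,2,4) bound \<open>x0 \<le> x\<close>])
      also have "\<dots> \<le> \<delta> * tail B x"
        using k tail_nonneg by (intro mult_right_mono) auto
      finally show ?thesis .
    qed
    moreover have "0 < 1 / v ^ k"
      using v by simp
    ultimately show ?thesis
      by blast
  qed
  with v(4) show thesis
    by (rule that)
qed

lemma tail_tendsto_0: "(tail B \<longlongrightarrow> 0) at_top"
proof (rule order_tendstoI)
  fix a :: real
  assume "a < 0"
  then show "eventually (\<lambda>x. a < tail B x) at_top"
    using tail_nonneg by (intro always_eventually) (auto intro: less_le_trans)
next
  fix a :: real
  assume "0 < a"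
  obtain x0 where "0 < x0" and small:
    "\<And>\<delta>. 0 < \<delta> \<Longrightarrow> \<exists>\<eta>>0. \<forall>x\<ge>x0. \<forall>w. 0 < w \<and> w \<le> \<eta> \<longrightarrow> tail B (x / w) \<le> \<delta> * tail B x"
    using tail_rescaled_small by blast
  obtain \<eta> where "0 < \<eta>" and \<eta>: "\<And>w. 0 < w \<Longrightarrow> w \<le> \<eta> \<Longrightarrow> tail B (x0 / w) \<le> a / 2 * tail B x0"
    using small[of "a / 2"] \<open>0 < a\<close> by auto
  have "tail B y < a" if "x0 / \<eta> \<le> y" for y
  proof -
    have "0 < y"
      using that divide_pos_pos[OF \<open>0 < x0\<close> \<open>0 < \<eta>\<close>] by linarith
    have "tail B y = tail B (x0 / (x0 / y))"
      using \<open>0 < x0\<close> by simp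
    also have "\<dots> \<le> a / 2 * tail B x0"
      using that \<open>0 < x0\<close> \<open>0 < \<eta>\<close> \<open>0 < y\<close> by (intro \<eta>) (auto simp: field_simps)
    also have "\<dots> \<le> a / 2"
      using \<open>0 < a\<close> B.prob_le_1[of "{x0<..}"] by (intro mult_left_le) (auto simp: tail_def)
    also have "\<dots> < a"
      using \<open>0 < a\<close> by simp
    finally show ?thesis .
  qed
  then show "eventually (\<lambda>x. tail B x < a) at_top"
    unfolding eventually_at_top_linorder by blast
qed

lemma tail_shift_le:
  assumes "0 \<le> h" "0 < \<epsilon>"
  shows "eventually (\<lambda>y. tail B (y - h) \<le> (1 + \<epsilon>) * tail B y) at_top"
proof -
  define f where "f y = (tail (B \<star> B) y / tail B y - 2 + tail B h) / (tail B h - tail B y)" for y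
  have "(f \<longlongrightarrow> (2 - 2 + tail B h) / (tail B h - 0)) at_top"
    unfolding f_def using tail_pos[of h] by (intro tendsto_intros tail_conv_ratio tail_tendsto_0) auto
  then have "(f \<longlongrightarrow> 1) at_top"
    using tail_pos[of h] by simp
  then have "eventually (\<lambda>y. f y < 1 + \<epsilon>) at_top"
    using assms(2) by (intro order_tendstoD) auto
  moreover have "eventually (\<lambda>y. tail B y < tail B h) at_top"
    using tail_pos[of h] by (intro order_tendstoD[OF tail_tendsto_0])
  ultimately show ?thesis
    using eventually_ge_at_top[of h]
  proof eventually_elim
    case (elim y)
    have "tail B (y - h) * (tail B h - tail B y) \<le> tail B y * (tail (B \<star> B) y / tail B y - 2 + tail B h)"
      using tail_conv_lower_shift[OF assms(1) elim(3)] tail_pos[of y] by (simp add: algebra_simps)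
    then have "tail B (y - h) \<le> tail B y * f y"
      using elim(2) by (simp add: f_def le_divide_eq)
    also have "\<dots> \<le> tail B y * (1 + \<epsilon>)"
      using elim(1) tail_pos[of y] by (intro mult_left_mono) auto
    finally show ?case
      by (simp add: mult.commute)
  qed
qed

lemma joint_excess_small:
  assumes "0 < \<epsilon>"
  obtains h0 where "0 \<le> h0"
    "\<And>h. h0 \<le> h \<Longrightarrow> eventually (\<lambda>y. measure (B \<Otimes>\<^sub>M B) (joint_excess h y) \<le> \<epsilon> * tail B y) at_top"
proof -
  obtain h1 where h1: "\<And>h. h1 \<le> h \<Longrightarrow> tail B h < \<epsilon> / 4"
    using order_tendstoD(2)[OF tail_tendsto_0, of "\<epsilon> / 4"] assms
    by (auto simp: eventually_at_top_linorder)
  have "eventually (\<lambda>y. measure (B \<Otimes>\<^sub>M B) (joint_excess h y) \<le> \<epsilon> * tail B y) at_top"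
    if "max h1 0 \<le> h" for h
  proof -
    have "eventually (\<lambda>y. tail (B \<star> B) y / tail B y < 2 + \<epsilon> / 2) at_top"
      using assms by (intro order_tendstoD[OF tail_conv_ratio]) auto
    then show ?thesis
      using eventually_gt_at_top[of "2 * h"]
    proof eventually_elim
      case (elim y)
      have "tail (B \<star> B) y < (2 + \<epsilon> / 2) * tail B y"
        using elim(1) tail_pos[of y] by (simp add: divide_less_eq)
      moreover have "tail B y * tail B h \<le> tail B y * (\<epsilon> / 4)"
        using h1[of h] that tail_pos[of y] by (intro mult_left_mono) auto
      ultimately show ?case
        using tail_conv_lower_joint[of h y] that elim(2) by (simp add: algebra_simps)
    qed
  qed
  then show thesis
    by (intro that[of "max h1 0"]) auto
qed

end

lemma measure_pair_joint_excess_le: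
  fixes R P Q :: "real measure"
  assumes R: "prob_space R" "sets R = sets borel"
    and P: "prob_space P" "sets P = sets borel" and Q: "prob_space Q" "sets Q = sets borel"
    and "0 \<le> K" "0 \<le> h" and tail_le: "\<And>t. h \<le> t \<Longrightarrow> measure P {t<..} \<le> K * measure Q {t<..}"
  shows "measure (R \<Otimes>\<^sub>M P) (joint_excess h y) \<le> K * measure (R \<Otimes>\<^sub>M Q) (joint_excess h y)"
proof -
  interpret R: prob_space R by fact
  interpret P: prob_space P by fact
  interpret Q: prob_space Q by fact
  interpret RP: pair_prob_space R P ..
  interpret RQ: pair_prob_space R Q ..
  have sets_RP: "joint_excess h y \<in> sets (R \<Otimes>\<^sub>M P)" and sets_RQ: "joint_excess h y \<in> sets (R \<Otimes>\<^sub>M Q)"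
    using R(2) P(2) Q(2) by (auto simp: sets_pair_measure_cong[of R borel])
  have slice: "Pair a -` joint_excess h y = (if h < a then {max h (y - a)<..} else {})" for a
    by (auto simp: joint_excess_def)
  have "emeasure P (Pair a -` joint_excess h y) \<le> ennreal K * emeasure Q (Pair a -` joint_excess h y)" for a
    using tail_le[of "max h (y - a)"] \<open>0 \<le> K\<close>
    by (simp add: slice P.emeasure_eq_measure Q.emeasure_eq_measure ennreal_mult[symmetric] ennreal_leI)
  then have "emeasure (R \<Otimes>\<^sub>M P) (joint_excess h y) \<le> ennreal K * emeasure (R \<Otimes>\<^sub>M Q) (joint_excess h y)"
    by (simp add: P.emeasure_pair_measure_alt[OF sets_RP] Q.emeasure_pair_measure_alt[OF sets_RQ]
        nn_integral_cmult[OF RQ.measurable_emeasure_Pair1[OF sets_RQ], symmetric] nn_integral_mono)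
  then show ?thesis
    using \<open>0 \<le> K\<close>
    by (simp add: RP.P.emeasure_eq_measure RQ.P.emeasure_eq_measure ennreal_mult[symmetric])
qed

lemma measure_pair_joint_excess_swap:
  assumes "sigma_finite_measure P" "sigma_finite_measure R" "sets P = sets borel" "sets R = sets borel"
  shows "measure (P \<Otimes>\<^sub>M R) (joint_excess h y) = measure (R \<Otimes>\<^sub>M P) (joint_excess h y)"
proof -
  interpret PR: pair_sigma_finite P R
    using assms by (simp add: pair_sigma_finite_def)
  have "joint_excess h y \<in> sets (P \<Otimes>\<^sub>M R)"
    using assms(3,4) by (simp add: sets_pair_measure_cong[of P borel])
  then show ?thesis
    by (subst PR.distr_pair_swap, subst measure_distr)
      (auto simp: space_pair_measure joint_excess_def sets_eq_imp_space_eq[OF assms(3)]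
        sets_eq_imp_space_eq[OF assms(4)] intro!: arg_cong[where f = "measure (R \<Otimes>\<^sub>M P)"])
qed

context prob_space
begin

lemma measure_distr_greaterThan:
  fixes X :: "'a \<Rightarrow> real"
  shows "X \<in> borel_measurable M \<Longrightarrow> measure (distr M borel X) {t<..} = prob {\<omega> \<in> space M. t < X \<omega>}"
  by (subst measure_distr) (auto intro!: arg_cong[where f = prob])

lemma prob_joint_excess_le:
  assumes "indep_var borel W borel S"
    and [measurable]: "W \<in> borel_measurable M" "S \<in> borel_measurable M"
    and B: "prob_space B" "sets B = sets borel"
    and "0 \<le> K1" "0 \<le> K2" "0 \<le> h"
    and W_tail: "\<And>t. h \<le> t \<Longrightarrow> prob {\<omega> \<in> space M. t < W \<omega>} \<le> K1 * tail B t"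
    and S_tail: "\<And>t. h \<le> t \<Longrightarrow> prob {\<omega> \<in> space M. t < S \<omega>} \<le> K2 * tail B t"
  shows "prob {\<omega> \<in> space M. h < W \<omega> \<and> h < S \<omega> \<and> y < W \<omega> + S \<omega>}
    \<le> K1 * K2 * measure (B \<Otimes>\<^sub>M B) (joint_excess h y)"
proof -
  let ?W = "distr M borel W" and ?S = "distr M borel S"
  have distrs: "prob_space ?W" "prob_space ?S" "sets ?W = sets borel" "sets ?S = sets borel"
    by (auto intro!: prob_space_distr)
  have "prob {\<omega> \<in> space M. h < W \<omega> \<and> h < S \<omega> \<and> y < W \<omega> + S \<omega>}
      = measure (distr M (borel \<Otimes>\<^sub>M borel) (\<lambda>\<omega>. (W \<omega>, S \<omega>))) (joint_excess h y)"
    by (subst measure_distr[OF _ joint_excess_sets]) (auto simp: joint_excess_def intro!: arg_cong[where f = prob])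
  also have "\<dots> = measure (?W \<Otimes>\<^sub>M ?S) (joint_excess h y)"
    using assms(1) by (simp add: indep_var_distribution_eq)
  also have "\<dots> \<le> K2 * measure (?W \<Otimes>\<^sub>M B) (joint_excess h y)"
    using distrs B assms(6-8) S_tail
    by (intro measure_pair_joint_excess_le) (auto simp: measure_distr_greaterThan tail_def)
  also have "measure (?W \<Otimes>\<^sub>M B) (joint_excess h y) = measure (B \<Otimes>\<^sub>M ?W) (joint_excess h y)"
    using distrs B by (intro measure_pair_joint_excess_swap) (auto intro: prob_space_imp_sigma_finite)
  also have "K2 * \<dots> \<le> K2 * (K1 * measure (B \<Otimes>\<^sub>M B) (joint_excess h y))"
    using distrs B assms(6-8) W_tail
    by (intro mult_left_mono measure_pair_joint_excess_le) (auto simp: measure_distr_greaterThan tail_def)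
  finally show ?thesis
    by (simp add: ac_simps)
qed

lemma prob_add_gt_le:
  fixes W S :: "'a \<Rightarrow> real"
  assumes [measurable]: "W \<in> borel_measurable M" "S \<in> borel_measurable M"
  shows "prob {\<omega> \<in> space M. y < W \<omega> + S \<omega>}
    \<le> prob {\<omega> \<in> space M. y - h < W \<omega>} + prob {\<omega> \<in> space M. y - h < S \<omega>}
      + prob {\<omega> \<in> space M. h < W \<omega> \<and> h < S \<omega> \<and> y < W \<omega> + S \<omega>}"
proof -
  let ?E1 = "{\<omega> \<in> space M. y - h < W \<omega>}" and ?E2 = "{\<omega> \<in> space M. y - h < S \<omega>}"
    and ?E3 = "{\<omega> \<in> space M. h < W \<omega> \<and> h < S \<omega> \<and> y < W \<omega> + S \<omega>}"
  have "{\<omega> \<in> space M. y < W \<omega> + S \<omega>} \<subseteq> ?E1 \<union> ?E2 \<union> ?E3"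
    by auto
  then have "prob {\<omega> \<in> space M. y < W \<omega> + S \<omega>} \<le> prob (?E1 \<union> ?E2 \<union> ?E3)"
    by (rule finite_measure_mono) measurable
  also have "\<dots> \<le> prob (?E1 \<union> ?E2) + prob ?E3"
    by (intro measure_subadditive) (auto simp: emeasure_eq_measure)
  also have "prob (?E1 \<union> ?E2) \<le> prob ?E1 + prob ?E2"
    by (intro measure_subadditive) (auto simp: emeasure_eq_measure)
  finally show ?thesis
    by simp
qed

end

section \<open>Weighted sums of heavy- and light-tailed variables\<close>

lemma eventually_at_top_diff_shift:
  "eventually P at_top \<Longrightarrow> eventually (\<lambda>y. P (y - (h::real))) at_top"
  unfolding eventually_at_top_linorder by (metis add.commute diff_add_cancel le_diff_eq)

lemma bigo_finite_uniform:
  fixes f g :: "'i \<Rightarrow> real \<Rightarrow> real"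
  assumes "finite L" "\<And>l. l \<in> L \<Longrightarrow> f l \<in> O(g l)"
  obtains K where "0 < K" "eventually (\<lambda>t. \<forall>l\<in>L. norm (f l t) \<le> K * norm (g l t)) at_top"
proof -
  have "\<forall>l\<in>L. \<exists>c>0. eventually (\<lambda>t. norm (f l t) \<le> c * norm (g l t)) at_top"
    using assms(2) by (blast elim: landau_o.bigE)
  then obtain c where c: "\<And>l. l \<in> L \<Longrightarrow> 0 < c l \<and> eventually (\<lambda>t. norm (f l t) \<le> c l * norm (g l t)) at_top"
    by metis
  define K where "K = 1 + (\<Sum>l\<in>L. c l)"
  have c_le_K: "c l \<le> K" if "l \<in> L" for l
    using assms(1) that c member_le_sum[of l L c] sum_nonneg[of L c] by (force simp: K_def less_imp_le)
  have "0 < K"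
    using c sum_nonneg[of L c] by (force simp: K_def less_imp_le)
  moreover have "eventually (\<lambda>t. \<forall>l\<in>L. norm (f l t) \<le> K * norm (g l t)) at_top"
    using assms(1) c
  proof (intro eventually_ball_finite ballI)
    fix l
    assume "l \<in> L"
    then show "eventually (\<lambda>t. norm (f l t) \<le> K * norm (g l t)) at_top"
      using c[of l] c_le_K[of l]
      by (auto elim!: eventually_mono intro: order_trans[OF _ mult_right_mono[OF _ abs_ge_zero]])
  qed
  ultimately show thesis
    by (rule that)
qed

lemma tail_bound_step_arith:
  fixes a b g c \<delta> \<epsilon> :: real
  assumes "0 \<le> a" "0 \<le> b" "0 \<le> g" "0 \<le> c" "\<epsilon> \<le> 1" "0 < \<delta>" and \<delta>: "\<delta> * (2 * c + 4) = \<epsilon>"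
  shows "((1 + \<delta>) * a + \<delta> * g) + ((1 + \<delta>) * ((1 + \<delta>) * b + c * \<delta> * g) + \<delta> * (2 * g)) + \<delta> * g
    \<le> (1 + \<epsilon>) * (a + b) + \<epsilon> * g"
proof -
  have "0 \<le> \<delta> * c" "\<delta> * (2 * c + 4) = 2 * (\<delta> * c) + 4 * \<delta>"
    using assms(4,6) by (simp_all add: algebra_simps)
  then have "4 * \<delta> \<le> \<epsilon>"
    using \<delta> by linarith
  then have "\<delta> * \<delta> \<le> \<delta>"
    using assms(5,6) by (intro mult_left_le) auto
  moreover have "(1 + \<delta>) * (1 + \<delta>) = 1 + 2 * \<delta> + \<delta> * \<delta>"
    by (simp add: algebra_simps)
  ultimately have "(1 + \<delta>) * (1 + \<delta>) \<le> 1 + \<epsilon>"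
    using \<open>4 * \<delta> \<le> \<epsilon>\<close> assms(6) by linarith
  then have "(1 + \<delta>) * ((1 + \<delta>) * b) \<le> (1 + \<epsilon>) * b"
    using assms(2) by (simp add: mult.assoc[symmetric] mult_right_mono)
  moreover have "(1 + \<delta>) * a \<le> (1 + \<epsilon>) * a"
    using \<open>4 * \<delta> \<le> \<epsilon>\<close> assms(1,6) by (intro mult_right_mono) auto
  moreover have "(1 + \<delta>) * (c * \<delta> * g) \<le> 2 * (c * \<delta> * g)"
    using \<open>4 * \<delta> \<le> \<epsilon>\<close> assms(3-6) by (intro mult_right_mono) auto
  moreover have "2 * (c * \<delta> * g) + 4 * (\<delta> * g) = \<epsilon> * g"
    using \<delta> by (simp add: algebra_simps flip: \<delta>)
  ultimately show ?thesis
    by (simp add: algebra_simps)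
qed

locale heavy_light_family = prob_space M for M :: "'w measure" +
  fixes X :: "nat \<Rightarrow> 'w \<Rightarrow> real" and N n :: nat
  assumes indep: "indep_vars (\<lambda>_. borel) X {1..N}"
    and nonneg: "\<And>l \<omega>. l \<in> {1..N} \<Longrightarrow> \<omega> \<in> space M \<Longrightarrow> 0 \<le> X l \<omega>"
    and heavy: "\<And>l. l \<in> {1..n} \<Longrightarrow> classA (distr M borel (X l))"
    and n_pos: "1 \<le> n" and n_le_N: "n \<le> N"
    and tail_bigo: "\<And>l. l \<in> {1..N} \<Longrightarrow> tail (distr M borel (X l)) \<in> O(tail (distr M borel (X 1)))"
    and tail_smallo: "\<And>l. l \<in> {n+1..N} \<Longrightarrow> tail (distr M borel (X l)) \<in> o(tail (distr M borel (X 1)))"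
begin

abbreviation G :: "nat \<Rightarrow> real \<Rightarrow> real" where
  "G l \<equiv> tail (distr M borel (X l))"

lemma measurable_X[measurable]: "l \<in> {1..N} \<Longrightarrow> X l \<in> borel_measurable M"
  using indep by (auto simp: indep_vars_def)

lemma G_eq: "l \<in> {1..N} \<Longrightarrow> G l t = prob {\<omega> \<in> space M. t < X l \<omega>}"
  by (simp add: tail_def measure_distr_greaterThan)

lemma G_mono: "l \<in> {1..N} \<Longrightarrow> s \<le> t \<Longrightarrow> G l t \<le> G l s"
  unfolding G_eq by (intro finite_measure_mono) auto

lemma prob_scaled_gt: "l \<in> {1..N} \<Longrightarrow> 0 < w \<Longrightarrow> prob {\<omega> \<in> space M. t < w * X l \<omega>} = G l (t / w)"
  unfolding G_eq by (auto intro!: arg_cong[where f = prob] simp: field_simps)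

lemma prob_scaled_gt_le:
  assumes "l \<in> {1..N}" "0 \<le> w" "w \<le> 1" "0 \<le> t"
  shows "prob {\<omega> \<in> space M. t < w * X l \<omega>} \<le> G l t"
  unfolding G_eq[OF assms(1)]
proof (rule finite_measure_mono)
  have "w * X l \<omega> \<le> X l \<omega>" if "\<omega> \<in> space M" for \<omega>
    using nonneg[OF assms(1) that] assms(2,3) by (simp add: mult_left_le_one_le)
  then show "{\<omega> \<in> space M. t < w * X l \<omega>} \<subseteq> {\<omega> \<in> space M. t < X l \<omega>}"
    by force
qed (use assms(1) in measurable)

lemma uniform_domination:
  obtains K x0 where "1 \<le> K" "0 \<le> x0" "\<And>l t. l \<in> {1..N} \<Longrightarrow> x0 \<le> t \<Longrightarrow> G l t \<le> K * G 1 t"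
proof -
  obtain K where "0 < K" and ev: "eventually (\<lambda>t. \<forall>l\<in>{1..N}. norm (G l t) \<le> K * norm (G 1 t)) at_top"
    using bigo_finite_uniform[of "{1..N}" G "\<lambda>_. G 1"] tail_bigo by blast
  have "eventually (\<lambda>t. \<forall>l\<in>{1..N}. G l t \<le> K * G 1 t) at_top"
    using ev by eventually_elim (simp add: tail_nonneg)
  then obtain x1 where x1: "\<And>l t. x1 \<le> t \<Longrightarrow> l \<in> {1..N} \<Longrightarrow> G l t \<le> K * G 1 t"
    unfolding eventually_at_top_linorder by blast
  show thesis
  proof (rule that[of "max K 1" "max x1 0"])
    fix l t
    assume "l \<in> {1..N}" "max x1 0 \<le> t"
    then show "G l t \<le> max K 1 * G 1 t"
      using x1[of t l] tail_nonneg[of "distr M borel (X 1)" t]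
      by (auto intro: order_trans[OF _ mult_right_mono])
  qed auto
qed

lemma light_tail_small: "l \<in> {n+1..N} \<Longrightarrow> 0 < \<delta> \<Longrightarrow> eventually (\<lambda>t. G l t \<le> \<delta> * G 1 t) at_top"
  using landau_o.smallD[OF tail_smallo] by (auto simp: tail_def)

text \<open>At tiny scales w a shifted rescaled tail is negligible against the tail of the first variable
  (the P_D property), at the remaining scales the shift costs a factor close to 1 (long tail).\<close>

lemma tail_shift_small_weights:
  assumes l: "l \<in> {1..N}" and "0 \<le> h" "0 < \<delta>"
  obtains \<eta> where "0 < \<eta>"
    "eventually (\<lambda>y. \<forall>w. 0 < w \<and> w \<le> \<eta> \<longrightarrow> G l ((y - h) / w) \<le> \<delta> * G 1 y) at_top"
proof -
  interpret B1: classA_distr "distr M borel (X 1)"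
    using heavy[of 1] n_pos by unfold_locales auto
  obtain K x0 where K: "1 \<le> K" "0 \<le> x0" and dom: "\<And>l t. l \<in> {1..N} \<Longrightarrow> x0 \<le> t \<Longrightarrow> G l t \<le> K * G 1 t"
    using uniform_domination by blast
  obtain x1 where "0 < x1" and rescaled:
    "\<And>\<delta>. 0 < \<delta> \<Longrightarrow> \<exists>\<eta>>0. \<forall>x\<ge>x1. \<forall>w. 0 < w \<and> w \<le> \<eta> \<longrightarrow> G 1 (x / w) \<le> \<delta> * G 1 x"
    using B1.tail_rescaled_small by blast
  obtain \<eta>0 where "0 < \<eta>0" and \<eta>: "\<And>x w. x1 \<le> x \<Longrightarrow> 0 < w \<Longrightarrow> w \<le> \<eta>0 \<Longrightarrow> G 1 (x / w) \<le> \<delta> / (2 * K) * G 1 x"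
    using rescaled[of "\<delta> / (2 * K)"] assms(3) K by auto
  define \<eta> where "\<eta> = min \<eta>0 1"
  have "eventually (\<lambda>y. G 1 (y - h) \<le> (1 + 1) * G 1 y) at_top"
    using B1.tail_shift_le[of h 1] assms by simp
  then have "eventually (\<lambda>y. \<forall>w. 0 < w \<and> w \<le> \<eta> \<longrightarrow> G l ((y - h) / w) \<le> \<delta> * G 1 y) at_top"
    using eventually_ge_at_top[of "h + x0 + x1"]
  proof eventually_elim
    case (elim y)
    show ?case
    proof (intro allI impI)
      fix w :: real
      assume w: "0 < w \<and> w \<le> \<eta>"
      then have "w \<le> 1" "w \<le> \<eta>0"
        by (simp_all add: \<eta>_def)
      have "y - h \<le> (y - h) / w"
        using w \<open>w \<le> 1\<close> elim(2) K \<open>0 < x1\<close> by (simp add: le_divide_eq mult_left_le)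
      then have "G l ((y - h) / w) \<le> K * G 1 ((y - h) / w)"
        using elim(2) \<open>0 < x1\<close> by (intro dom l) simp
      also have "\<dots> \<le> K * (\<delta> / (2 * K) * G 1 (y - h))"
        using K elim(2) w \<open>w \<le> \<eta>0\<close> \<open>0 < x1\<close> by (intro mult_left_mono \<eta>) auto
      also have "\<dots> \<le> \<delta> * G 1 y"
        using K assms(3) elim(1) by (simp add: field_simps)
      finally show "G l ((y - h) / w) \<le> \<delta> * G 1 y" .
    qed
  qed
  moreover have "0 < \<eta>"
    using \<open>0 < \<eta>0\<close> by (simp add: \<eta>_def)
  ultimately show thesis
    using that by blast
qed

lemma tail_shift_large_weights:
  assumes l: "l \<in> {1..n}" and "0 \<le> h" "0 < \<delta>" "0 < \<eta>"
  shows "eventually (\<lambda>y. \<forall>w. \<eta> \<le> w \<and> w \<le> 1 \<longrightarrow> G l ((y - h) / w) \<le> (1 + \<delta>) * G l (y / w)) at_top"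
proof -
  interpret Bl: classA_distr "distr M borel (X l)"
    using heavy[OF l] by unfold_locales
  obtain z0 where z0: "\<And>z. z0 \<le> z \<Longrightarrow> G l (z - h / \<eta>) \<le> (1 + \<delta>) * G l z"
    using Bl.tail_shift_le[of "h / \<eta>" \<delta>] assms by (auto simp: eventually_at_top_linorder)
  have "G l ((y - h) / w) \<le> (1 + \<delta>) * G l (y / w)" if "max z0 0 \<le> y" "\<eta> \<le> w" "w \<le> 1" for y w
  proof -
    have "y / w - h / \<eta> \<le> (y - h) / w"
      using that assms by (simp add: diff_divide_distrib divide_left_mono)
    then have "G l ((y - h) / w) \<le> G l (y / w - h / \<eta>)"
      using l n_le_N by (intro G_mono) auto
    also have "\<dots> \<le> (1 + \<delta>) * G l (y / w)"
    proof (rule z0)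
      have "y \<le> y / w"
        using that assms by (simp add: le_divide_eq mult_left_le)
      then show "z0 \<le> y / w"
        using that(1) by linarith
    qed
    finally show ?thesis .
  qed
  then show ?thesis
    unfolding eventually_at_top_linorder by blast
qed

lemma tail_rescaled_shift_le:
  assumes l: "l \<in> {1..n}" and "0 \<le> h" "0 < \<delta>"
  shows "eventually (\<lambda>y. \<forall>w. 0 < w \<and> w \<le> 1 \<longrightarrow>
    G l ((y - h) / w) \<le> (1 + \<delta>) * G l (y / w) + \<delta> * G 1 y) at_top"
proof -
  obtain \<eta> where "0 < \<eta>" and small:
    "eventually (\<lambda>y. \<forall>w. 0 < w \<and> w \<le> \<eta> \<longrightarrow> G l ((y - h) / w) \<le> \<delta> * G 1 y) at_top"
    using tail_shift_small_weights[of l h \<delta>] assms n_le_N by auto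
  from small tail_shift_large_weights[OF assms \<open>0 < \<eta>\<close>] show ?thesis
  proof eventually_elim
    case (elim y)
    have "G l ((y - h) / w) \<le> (1 + \<delta>) * G l (y / w) + \<delta> * G 1 y" if "0 < w" "w \<le> 1" for w
      using elim[rule_format, of w] that tail_nonneg[of "distr M borel (X l)" "y / w"]
        tail_nonneg[of "distr M borel (X 1)" y] assms(3)
      by (cases "w \<le> \<eta>") (auto intro: add_increasing add_increasing2)
    then show ?case
      by blast
  qed
qed

text \<open>Heavy weights must be positive, since heavy_tail_sum divides by them.\<close>

definition admissible :: "nat set \<Rightarrow> (nat \<Rightarrow> real) \<Rightarrow> bool" where
  "admissible I w \<longleftrightarrow> (\<forall>l\<in>I. 0 \<le> w l \<and> w l \<le> 1 \<and> (l \<le> n \<longrightarrow> 0 < w l))"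

definition wsum :: "nat set \<Rightarrow> (nat \<Rightarrow> real) \<Rightarrow> 'w \<Rightarrow> real" where
  "wsum I w \<omega> = (\<Sum>l\<in>I. w l * X l \<omega>)"

definition heavy_tail_sum :: "nat set \<Rightarrow> (nat \<Rightarrow> real) \<Rightarrow> real \<Rightarrow> real" where
  "heavy_tail_sum I w y = (\<Sum>l\<in>I \<inter> {1..n}. G l (y / w l))"

definition wsum_tail_bound :: "nat set \<Rightarrow> real \<Rightarrow> bool" where
  "wsum_tail_bound I \<epsilon> \<longleftrightarrow> eventually (\<lambda>y. \<forall>w. admissible I w \<longrightarrow>
      prob {\<omega> \<in> space M. y < wsum I w \<omega>} \<le> (1 + \<epsilon>) * heavy_tail_sum I w y + \<epsilon> * G 1 y) at_top"

lemma measurable_wsum[measurable]: "I \<subseteq> {1..N} \<Longrightarrow> wsum I w \<in> borel_measurable M"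
  unfolding wsum_def by (intro borel_measurable_sum borel_measurable_times) auto

lemma heavy_tail_sum_nonneg: "0 \<le> heavy_tail_sum I w y"
  unfolding heavy_tail_sum_def by (intro sum_nonneg) (simp add: tail_nonneg)

lemma admissible_insertD: "admissible (insert k I) w \<Longrightarrow> admissible I w"
  by (simp add: admissible_def)

lemma wsum_insert: "finite I \<Longrightarrow> k \<notin> I \<Longrightarrow> wsum (insert k I) w \<omega> = w k * X k \<omega> + wsum I w \<omega>"
  by (simp add: wsum_def)

lemma heavy_tail_sum_insert:
  assumes "finite I" "k \<notin> I" "1 \<le> k"
  shows "heavy_tail_sum (insert k I) w y = (if k \<le> n then G k (y / w k) else 0) + heavy_tail_sum I w y"
proof -
  have "insert k I \<inter> {1..n} = (if k \<le> n then insert k (I \<inter> {1..n}) else I \<inter> {1..n})"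
    using assms by auto
  then show ?thesis
    using assms by (simp add: heavy_tail_sum_def)
qed

lemma indep_var_wsum_insert:
  assumes "finite I" "k \<notin> I" "insert k I \<subseteq> {1..N}"
  shows "indep_var borel (\<lambda>\<omega>. w k * X k \<omega>) borel (wsum I w)"
proof -
  have "indep_vars (\<lambda>_. borel) (\<lambda>l \<omega>. w l * X l \<omega>) (insert k I)"
    by (rule indep_vars_compose2[OF indep_vars_subset[OF indep assms(3)]]) simp
  from indep_vars_sum[OF assms(1,2) this] show ?thesis
    unfolding wsum_def .
qed

lemma wsum_tail_bound_mono:
  assumes "wsum_tail_bound I \<epsilon>" "\<epsilon> \<le> \<epsilon>'"
  shows "wsum_tail_bound I \<epsilon>'"
proof -
  have "(1 + \<epsilon>) * heavy_tail_sum I w y + \<epsilon> * G 1 y \<le> (1 + \<epsilon>') * heavy_tail_sum I w y + \<epsilon>' * G 1 y" for w y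
    using assms(2) heavy_tail_sum_nonneg tail_nonneg by (intro add_mono mult_right_mono) auto
  with assms(1) show ?thesis
    unfolding wsum_tail_bound_def by (elim eventually_mono) (meson order_trans)
qed

lemma wsum_tail_bound_empty: "0 < \<epsilon> \<Longrightarrow> wsum_tail_bound {} \<epsilon>"
  unfolding wsum_tail_bound_def
  by (intro eventually_mono[OF eventually_ge_at_top[of 0]])
    (simp add: wsum_def heavy_tail_sum_def tail_nonneg not_less)

lemma wsum_tail_dominated:
  assumes "finite I" "I \<subseteq> {1..N}" "wsum_tail_bound I 1"
  obtains K2 y1 where "0 < K2"
    "\<And>t w. y1 \<le> t \<Longrightarrow> admissible I w \<Longrightarrow> prob {\<omega> \<in> space M. t < wsum I w \<omega>} \<le> K2 * G 1 t"
proof -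
  obtain K x0 where K: "1 \<le> K" "0 \<le> x0" and dom: "\<And>l t. l \<in> {1..N} \<Longrightarrow> x0 \<le> t \<Longrightarrow> G l t \<le> K * G 1 t"
    using uniform_domination by blast
  obtain y1 where y1: "\<And>t w. y1 \<le> t \<Longrightarrow> admissible I w \<Longrightarrow>
      prob {\<omega> \<in> space M. t < wsum I w \<omega>} \<le> 2 * heavy_tail_sum I w t + G 1 t"
    using assms(3) by (auto simp: wsum_tail_bound_def eventually_at_top_linorder)
  have "prob {\<omega> \<in> space M. t < wsum I w \<omega>} \<le> (2 * card I * K + 1) * G 1 t"
    if t: "max y1 x0 \<le> t" and w: "admissible I w" for t w
  proof -
    have "G l (t / w l) \<le> K * G 1 t" if l: "l \<in> I \<inter> {1..n}" for l
    proof -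
      have "0 < w l" "w l \<le> 1" "l \<in> {1..N}"
        using w l assms(2) by (auto simp: admissible_def)
      then have "t \<le> t / w l"
        using t K by (simp add: le_divide_eq mult_left_le)
      then have "G l (t / w l) \<le> G l t"
        by (rule G_mono[OF \<open>l \<in> {1..N}\<close>])
      also have "\<dots> \<le> K * G 1 t"
        using t \<open>l \<in> {1..N}\<close> by (intro dom) auto
      finally show ?thesis .
    qed
    then have "heavy_tail_sum I w t \<le> card (I \<inter> {1..n}) * (K * G 1 t)"
      unfolding heavy_tail_sum_def by (rule sum_bounded_above)
    also have "\<dots> \<le> card I * (K * G 1 t)"
      using assms(1) K tail_nonneg[of "distr M borel (X 1)" t]
      by (intro mult_right_mono) (auto intro: card_mono)
    finally have "heavy_tail_sum I w t \<le> card I * (K * G 1 t)" .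
    moreover have "(2 * card I * K + 1) * G 1 t = 2 * (card I * (K * G 1 t)) + G 1 t"
      by (simp add: algebra_simps)
    ultimately show ?thesis
      using y1[OF _ w, of t] t by linarith
  qed
  moreover have "0 < 2 * card I * K + 1"
    using K by (simp add: add_nonneg_pos)
  ultimately show thesis
    using that by blast
qed

lemma single_term_bound:
  assumes k: "k \<in> {1..N}" and "0 \<le> h" "0 < \<delta>"
  shows "eventually (\<lambda>y. \<forall>w. admissible {k} w \<longrightarrow> prob {\<omega> \<in> space M. y - h < w k * X k \<omega>}
    \<le> (1 + \<delta>) * (if k \<le> n then G k (y / w k) else 0) + \<delta> * G 1 y) at_top"
proof (cases "k \<le> n")
  case True
  with k have "k \<in> {1..n}"
    by simp
  from tail_rescaled_shift_le[OF this assms(2,3)] show ?thesis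
    by eventually_elim (use True k in \<open>auto simp: admissible_def prob_scaled_gt\<close>)
next
  case False
  with k have "k \<in> {n+1..N}"
    by simp
  interpret B1: classA_distr "distr M borel (X 1)"
    using heavy[of 1] n_pos by unfold_locales auto
  have "eventually (\<lambda>y. G k (y - h) \<le> \<delta> / 2 * G 1 (y - h)) at_top"
    using eventually_at_top_diff_shift[OF light_tail_small[OF \<open>k \<in> {n+1..N}\<close>, of "\<delta> / 2"]] assms(3)
    by simp
  moreover have "eventually (\<lambda>y. G 1 (y - h) \<le> (1 + 1) * G 1 y) at_top"
    using B1.tail_shift_le[of h 1] assms(2) by simp
  ultimately show ?thesis
    using eventually_ge_at_top[of h]
  proof eventually_elim
    case (elim y)
    have "prob {\<omega> \<in> space M. y - h < w k * X k \<omega>} \<le> \<delta> * G 1 y" if "admissible {k} w" for w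
    proof -
      have "prob {\<omega> \<in> space M. y - h < w k * X k \<omega>} \<le> G k (y - h)"
        using that elim(3) k by (intro prob_scaled_gt_le) (auto simp: admissible_def)
      also have "\<dots> \<le> \<delta> / 2 * G 1 (y - h)"
        by (rule elim(1))
      also have "\<dots> \<le> \<delta> / 2 * (2 * G 1 y)"
        using elim(2) assms(3) by (intro mult_left_mono) auto
      finally show ?thesis
        by simp
    qed
    then show ?case
      using False by simp
  qed
qed

lemma heavy_tail_sum_shift_le:
  fixes \<delta> :: real
  assumes "finite I" "0 \<le> h" "0 < \<delta>"
  shows "eventually (\<lambda>y. \<forall>w. admissible I w \<longrightarrow>
    heavy_tail_sum I w (y - h) \<le> (1 + \<delta>) * heavy_tail_sum I w y + card I * \<delta> * G 1 y) at_top"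
proof -
  have "eventually (\<lambda>y. \<forall>l\<in>I \<inter> {1..n}. \<forall>v. 0 < v \<and> v \<le> 1 \<longrightarrow>
      G l ((y - h) / v) \<le> (1 + \<delta>) * G l (y / v) + \<delta> * G 1 y) at_top"
    using assms by (intro eventually_ball_finite ballI tail_rescaled_shift_le) auto
  then show ?thesis
  proof eventually_elim
    case (elim y)
    show ?case
    proof (intro allI impI)
      fix w
      assume w: "admissible I w"
      have "heavy_tail_sum I w (y - h) \<le> (\<Sum>l\<in>I \<inter> {1..n}. (1 + \<delta>) * G l (y / w l) + \<delta> * G 1 y)"
        unfolding heavy_tail_sum_def using elim w by (intro sum_mono) (auto simp: admissible_def)
      also have "\<dots> = (1 + \<delta>) * heavy_tail_sum I w y + card (I \<inter> {1..n}) * (\<delta> * G 1 y)"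
        by (simp add: heavy_tail_sum_def sum.distrib sum_distrib_left)
      also have "\<dots> \<le> (1 + \<delta>) * heavy_tail_sum I w y + card I * (\<delta> * G 1 y)"
        using assms tail_nonneg[of "distr M borel (X 1)" y]
        by (intro add_left_mono mult_right_mono) (auto intro: card_mono)
      finally show "heavy_tail_sum I w (y - h) \<le> (1 + \<delta>) * heavy_tail_sum I w y + card I * \<delta> * G 1 y"
        by (simp add: mult.assoc)
    qed
  qed
qed

lemma prob_joint_wsum_le:
  assumes I: "finite I" "k \<notin> I" "insert k I \<subseteq> {1..N}" and w: "admissible (insert k I) w"
    and "0 \<le> h" "0 \<le> K" "0 \<le> K2"
    and new: "\<And>t. h \<le> t \<Longrightarrow> G k t \<le> K * G 1 t"
    and old: "\<And>t. h \<le> t \<Longrightarrow> prob {\<omega> \<in> space M. t < wsum I w \<omega>} \<le> K2 * G 1 t"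
  shows "prob {\<omega> \<in> space M. h < w k * X k \<omega> \<and> h < wsum I w \<omega> \<and> y < w k * X k \<omega> + wsum I w \<omega>}
    \<le> K * K2 * measure (distr M borel (X 1) \<Otimes>\<^sub>M distr M borel (X 1)) (joint_excess h y)"
proof (rule prob_joint_excess_le[OF indep_var_wsum_insert[OF I]])
  fix t
  assume "h \<le> t"
  have "prob {\<omega> \<in> space M. t < w k * X k \<omega>} \<le> G k t"
    using w \<open>h \<le> t\<close> \<open>0 \<le> h\<close> I(3) by (intro prob_scaled_gt_le) (auto simp: admissible_def)
  also have "\<dots> \<le> K * G 1 t"
    using \<open>h \<le> t\<close> by (rule new)
  finally show "prob {\<omega> \<in> space M. t < w k * X k \<omega>} \<le> K * tail (distr M borel (X 1)) t" .
qed (use I assms(5-7) old heavy[of 1] n_pos classA_distr.prob_space_B[of "distr M borel (X 1)"]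
  in \<open>auto intro!: measurable_wsum borel_measurable_times measurable_X classA_distr.intro\<close>)

lemma joint_term_small:
  assumes I: "finite I" "k \<notin> I" "insert k I \<subseteq> {1..N}" and "0 < K2"
    and dom: "\<And>t w. y1 \<le> t \<Longrightarrow> admissible I w \<Longrightarrow> prob {\<omega> \<in> space M. t < wsum I w \<omega>} \<le> K2 * G 1 t"
    and "0 < \<delta>"
  obtains h where "0 \<le> h" "eventually (\<lambda>y. \<forall>w. admissible (insert k I) w \<longrightarrow>
      prob {\<omega> \<in> space M. h < w k * X k \<omega> \<and> h < wsum I w \<omega> \<and> y < w k * X k \<omega> + wsum I w \<omega>}
        \<le> \<delta> * G 1 y) at_top"
proof -
  interpret B1: classA_distr "distr M borel (X 1)"
    using heavy[of 1] n_pos by unfold_locales auto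
  obtain K x0 where K: "1 \<le> K" "0 \<le> x0" and dom_K: "\<And>l t. l \<in> {1..N} \<Longrightarrow> x0 \<le> t \<Longrightarrow> G l t \<le> K * G 1 t"
    using uniform_domination by blast
  obtain h0 where small: "\<And>h. h0 \<le> h \<Longrightarrow> eventually (\<lambda>y.
      measure (distr M borel (X 1) \<Otimes>\<^sub>M distr M borel (X 1)) (joint_excess h y) \<le> \<delta> / (K * K2) * G 1 y) at_top"
    using B1.joint_excess_small[of "\<delta> / (K * K2)"] K \<open>0 < K2\<close> \<open>0 < \<delta>\<close> by auto
  define h where "h = max h0 (max x0 y1)"
  have "0 \<le> h" "h0 \<le> h"
    using K by (simp_all add: h_def)
  have "eventually (\<lambda>y. \<forall>w. admissible (insert k I) w \<longrightarrow>
      prob {\<omega> \<in> space M. h < w k * X k \<omega> \<and> h < wsum I w \<omega> \<and> y < w k * X k \<omega> + wsum I w \<omega>}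
        \<le> \<delta> * G 1 y) at_top"
    using small[OF \<open>h0 \<le> h\<close>]
  proof (elim eventually_mono, intro allI impI)
    fix y w
    assume w: "admissible (insert k I) w" and joint_small:
      "measure (distr M borel (X 1) \<Otimes>\<^sub>M distr M borel (X 1)) (joint_excess h y) \<le> \<delta> / (K * K2) * G 1 y"
    have "prob {\<omega> \<in> space M. h < w k * X k \<omega> \<and> h < wsum I w \<omega> \<and> y < w k * X k \<omega> + wsum I w \<omega>}
        \<le> K * K2 * measure (distr M borel (X 1) \<Otimes>\<^sub>M distr M borel (X 1)) (joint_excess h y)"
      using I(3) K \<open>0 < K2\<close> \<open>0 \<le> h\<close>
      by (intro prob_joint_wsum_le[OF I w] dom_K dom[OF _ admissible_insertD[OF w]]) (auto simp: h_def)
    also have "\<dots> \<le> K * K2 * (\<delta> / (K * K2) * G 1 y)"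
      using joint_small K \<open>0 < K2\<close> by (intro mult_left_mono) auto
    also have "\<dots> = \<delta> * G 1 y"
      using K \<open>0 < K2\<close> by simp
    finally show "prob {\<omega> \<in> space M. h < w k * X k \<omega> \<and> h < wsum I w \<omega> \<and> y < w k * X k \<omega> + wsum I w \<omega>}
        \<le> \<delta> * G 1 y" .
  qed
  with \<open>0 \<le> h\<close> show thesis
    by (rule that)
qed

text \<open>Induction step: split the event that the weighted sum exceeds y into "the new summand exceeds
  y - h", "the old sum exceeds y - h" and "both exceed h"; the third part is negligible by
  subexponentiality, the first two are bounded by the long-tail property and the induction hypothesis.\<close>

lemma prob_wsum_insert_le:
  fixes \<delta> :: real
  assumes I: "finite I" "k \<notin> I" "insert k I \<subseteq> {1..N}"
    and "0 < \<delta>" and \<delta>: "\<delta> * (2 * card I + 4) = \<epsilon>" and "\<epsilon> \<le> 1"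
    and new: "prob {\<omega> \<in> space M. y - h < w k * X k \<omega>}
      \<le> (1 + \<delta>) * (if k \<le> n then G k (y / w k) else 0) + \<delta> * G 1 y"
    and old: "prob {\<omega> \<in> space M. y - h < wsum I w \<omega>}
      \<le> (1 + \<delta>) * heavy_tail_sum I w (y - h) + \<delta> * G 1 (y - h)"
    and old_shift: "heavy_tail_sum I w (y - h) \<le> (1 + \<delta>) * heavy_tail_sum I w y + card I * \<delta> * G 1 y"
    and G_shift: "G 1 (y - h) \<le> 2 * G 1 y"
    and joint: "prob {\<omega> \<in> space M. h < w k * X k \<omega> \<and> h < wsum I w \<omega> \<and> y < w k * X k \<omega> + wsum I w \<omega>}
      \<le> \<delta> * G 1 y"
  shows "prob {\<omega> \<in> space M. y < wsum (insert k I) w \<omega>}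
    \<le> (1 + \<epsilon>) * heavy_tail_sum (insert k I) w y + \<epsilon> * G 1 y"
proof -
  define a where "a = (if k \<le> n then G k (y / w k) else 0)"
  define b where "b = heavy_tail_sum I w y"
  define g where "g = G 1 y"
  have "0 \<le> a" "0 \<le> b" "0 \<le> g"
    by (simp_all add: a_def b_def g_def tail_nonneg heavy_tail_sum_nonneg)
  have "prob {\<omega> \<in> space M. y - h < wsum I w \<omega>} \<le> (1 + \<delta>) * ((1 + \<delta>) * b + card I * \<delta> * g) + \<delta> * (2 * g)"
    using old old_shift G_shift \<open>0 < \<delta>\<close> unfolding b_def g_def
    by (elim order_trans) (intro add_mono mult_left_mono; simp)
  moreover have "prob {\<omega> \<in> space M. y < wsum (insert k I) w \<omega>}
      \<le> prob {\<omega> \<in> space M. y - h < w k * X k \<omega>} + prob {\<omega> \<in> space M. y - h < wsum I w \<omega>}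
        + prob {\<omega> \<in> space M. h < w k * X k \<omega> \<and> h < wsum I w \<omega> \<and> y < w k * X k \<omega> + wsum I w \<omega>}"
    using I by (simp add: wsum_insert prob_add_gt_le)
  ultimately have "prob {\<omega> \<in> space M. y < wsum (insert k I) w \<omega>}
      \<le> ((1 + \<delta>) * a + \<delta> * g) + ((1 + \<delta>) * ((1 + \<delta>) * b + card I * \<delta> * g) + \<delta> * (2 * g)) + \<delta> * g"
    using new joint by (simp add: a_def g_def)
  also have "\<dots> \<le> (1 + \<epsilon>) * (a + b) + \<epsilon> * g"
    using \<open>0 \<le> a\<close> \<open>0 \<le> b\<close> \<open>0 \<le> g\<close> \<open>0 < \<delta>\<close> \<delta> \<open>\<epsilon> \<le> 1\<close> by (intro tail_bound_step_arith) auto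
  also have "\<dots> = (1 + \<epsilon>) * heavy_tail_sum (insert k I) w y + \<epsilon> * G 1 y"
    using I by (simp add: heavy_tail_sum_insert a_def b_def g_def)
  finally show ?thesis .
qed

lemma wsum_tail_bound_insert:
  assumes I: "finite I" "k \<notin> I" "insert k I \<subseteq> {1..N}"
    and IH: "\<And>\<epsilon>. 0 < \<epsilon> \<Longrightarrow> wsum_tail_bound I \<epsilon>" and "0 < \<epsilon>" "\<epsilon> \<le> 1"
  shows "wsum_tail_bound (insert k I) \<epsilon>"
proof -
  define \<delta> where "\<delta> = \<epsilon> / (2 * card I + 4)"
  have "0 < \<delta>" and \<delta>: "\<delta> * (2 * card I + 4) = \<epsilon>"
    using \<open>0 < \<epsilon>\<close> by (simp_all add: \<delta>_def)
  interpret B1: classA_distr "distr M borel (X 1)"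
    using heavy[of 1] n_pos by unfold_locales auto
  obtain K2 y1 where "0 < K2" and dom: "\<And>t w. y1 \<le> t \<Longrightarrow> admissible I w \<Longrightarrow>
      prob {\<omega> \<in> space M. t < wsum I w \<omega>} \<le> K2 * G 1 t"
    using wsum_tail_dominated[OF I(1) _ IH[of 1]] I(3) by auto
  obtain h where "0 \<le> h" and joint: "eventually (\<lambda>y. \<forall>w. admissible (insert k I) w \<longrightarrow>
      prob {\<omega> \<in> space M. h < w k * X k \<omega> \<and> h < wsum I w \<omega> \<and> y < w k * X k \<omega> + wsum I w \<omega>}
        \<le> \<delta> * G 1 y) at_top"
    using joint_term_small[OF I \<open>0 < K2\<close> dom \<open>0 < \<delta>\<close>] by blast
  have "k \<in> {1..N}"
    using I(3) by simp
  note new = single_term_bound[OF this \<open>0 \<le> h\<close> \<open>0 < \<delta>\<close>]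
  note old = eventually_at_top_diff_shift[OF IH[OF \<open>0 < \<delta>\<close>, unfolded wsum_tail_bound_def], of h]
  note old_shift = heavy_tail_sum_shift_le[OF I(1) \<open>0 \<le> h\<close> \<open>0 < \<delta>\<close>]
  have G_shift: "eventually (\<lambda>y. G 1 (y - h) \<le> 2 * G 1 y) at_top"
    using B1.tail_shift_le[of h 1] \<open>0 \<le> h\<close> by simp
  from new old old_shift G_shift joint show ?thesis
    unfolding wsum_tail_bound_def
  proof eventually_elim
    case (elim y)
    show ?case
    proof (intro allI impI)
      fix w
      assume w: "admissible (insert k I) w"
      then have "admissible {k} w" "admissible I w"
        by (simp_all add: admissible_def)
      with elim w show "prob {\<omega> \<in> space M. y < wsum (insert k I) w \<omega>}
          \<le> (1 + \<epsilon>) * heavy_tail_sum (insert k I) w y + \<epsilon> * G 1 y"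
        by (intro prob_wsum_insert_le[OF I \<open>0 < \<delta>\<close> \<delta> \<open>\<epsilon> \<le> 1\<close>]) auto
    qed
  qed
qed

lemma wsum_tail_bound_all: "finite I \<Longrightarrow> I \<subseteq> {1..N} \<Longrightarrow> 0 < \<epsilon> \<Longrightarrow> wsum_tail_bound I \<epsilon>"
proof (induction I arbitrary: \<epsilon> rule: finite_induct)
  case empty
  then show ?case
    by (simp add: wsum_tail_bound_empty)
next
  case (insert k I)
  then have "wsum_tail_bound (insert k I) (min \<epsilon> 1)"
    by (intro wsum_tail_bound_insert) auto
  then show ?case
    by (rule wsum_tail_bound_mono) simp
qed

end

section \<open>Scaled sums of random vectors\<close>

lemma (in prob_space) prob_UN_ge_Bonferroni:
  assumes "finite I" "\<And>i. i \<in> I \<Longrightarrow> E i \<in> events"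
  shows "(\<Sum>i\<in>I. prob (E i) - (\<Sum>k\<in>I - {i}. prob (E i \<inter> E k))) \<le> prob (\<Union>i\<in>I. E i)"
proof -
  define F where "F i = E i - (\<Union>k\<in>I - {i}. E k)" for i
  have F: "F i \<in> events" if "i \<in> I" for i
    unfolding F_def using that assms by (intro sets.Diff sets.finite_UN) auto
  have "prob (E i) - (\<Sum>k\<in>I - {i}. prob (E i \<inter> E k)) \<le> prob (F i)" if "i \<in> I" for i
  proof -
    have "prob (E i) \<le> prob (F i \<union> (\<Union>k\<in>I - {i}. E i \<inter> E k))"
      using assms that F by (intro finite_measure_mono sets.Un sets.finite_UN) (auto simp: F_def)
    also have "\<dots> \<le> prob (F i) + prob (\<Union>k\<in>I - {i}. E i \<inter> E k)"
      using assms that F by (intro measure_subadditive sets.finite_UN) (auto simp: emeasure_eq_measure)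
    also have "prob (\<Union>k\<in>I - {i}. E i \<inter> E k) \<le> (\<Sum>k\<in>I - {i}. prob (E i \<inter> E k))"
      using assms that by (intro finite_measure_subadditive_finite) auto
    finally show ?thesis
      by simp
  qed
  then have "(\<Sum>i\<in>I. prob (E i) - (\<Sum>k\<in>I - {i}. prob (E i \<inter> E k))) \<le> (\<Sum>i\<in>I. prob (F i))"
    by (rule sum_mono)
  also have "\<dots> = prob (\<Union>i\<in>I. F i)"
    using assms F by (intro finite_measure_finite_Union[symmetric]) (auto simp: disjoint_family_on_def F_def)
  also have "\<dots> \<le> prob (\<Union>i\<in>I. E i)"
    using assms by (intro finite_measure_mono sets.finite_UN) (auto simp: F_def)
  finally show ?thesis .
qed

lemma tendsto_SUP_ereal_0:
  assumes "C \<noteq> {}" and small: "\<And>r. 0 < r \<Longrightarrow> eventually (\<lambda>x. \<forall>c\<in>C. \<bar>f c x\<bar> \<le> r) F"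
  shows "((\<lambda>x. SUP c\<in>C. ereal \<bar>f c x\<bar>) \<longlongrightarrow> 0) F"
proof (rule order_tendstoI)
  fix a :: ereal
  assume "a < 0"
  moreover have "0 \<le> (SUP c\<in>C. ereal \<bar>f c x\<bar>)" for x
    using \<open>C \<noteq> {}\<close> by (auto intro: SUP_upper2)
  ultimately show "eventually (\<lambda>x. a < (SUP c\<in>C. ereal \<bar>f c x\<bar>)) F"
    by (auto intro: always_eventually less_le_trans)
next
  fix a :: ereal
  assume "0 < a"
  then obtain r where "0 < r" "ereal r < a"
    using ereal_dense2 by (metis ereal_less(2))
  from small[OF \<open>0 < r\<close>] show "eventually (\<lambda>x. (SUP c\<in>C. ereal \<bar>f c x\<bar>) < a) F"
  proof eventually_elim
    case (elim x)
    then have "(SUP c\<in>C. ereal \<bar>f c x\<bar>) \<le> ereal r"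
      by (intro SUP_least) auto
    then show ?case
      using \<open>ereal r < a\<close> by (rule le_less_trans)
  qed
qed

locale heavy_light_vectors = prob_space M + classR_set A
  for M :: "'w measure" and A :: "(real ^ 'd) set" +
  fixes Z :: "nat \<Rightarrow> 'w \<Rightarrow> real ^ 'd" and V :: "nat \<Rightarrow> (real ^ 'd) measure"
    and n m :: nat and b :: real
  assumes n_pos: "1 \<le> n"
    and indep_Z: "indep_vars (\<lambda>_. borel) Z {1..n+m}"
    and Z_nonneg: "\<And>i \<omega> k. i \<in> {1..n+m} \<Longrightarrow> \<omega> \<in> space M \<Longrightarrow> 0 \<le> Z i \<omega> $ k"
    and distr_Z: "\<And>i. i \<in> {1..n+m} \<Longrightarrow> distr M borel (Z i) = V i"
    and classAA_V: "\<And>i. i \<in> {1..n} \<Longrightarrow> classAA A (V i)"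
    and equiv: "\<And>i. i \<in> {2..n} \<Longrightarrow>
        (\<lambda>x. measure (V i) (dil x A)) \<in> O(\<lambda>x. measure (V 1) (dil x A)) \<and>
        (\<lambda>x. measure (V 1) (dil x A)) \<in> O(\<lambda>x. measure (V i) (dil x A))"
    and small: "\<And>j. j \<in> {n+1..n+m} \<Longrightarrow>
        (\<lambda>x. measure (V j) (dil x A)) \<in> o(\<lambda>x. measure (V 1) (dil x A))"
    and b_pos: "0 < b"
begin

definition X :: "nat \<Rightarrow> 'w \<Rightarrow> real" where
  "X l \<omega> = supA A (Z l \<omega>)"

lemma measurable_Z[measurable]: "l \<in> {1..n+m} \<Longrightarrow> Z l \<in> borel_measurable M"
  using indep_Z by (auto simp: indep_vars_def)

lemma measurable_X[measurable]: "l \<in> {1..n+m} \<Longrightarrow> X l \<in> borel_measurable M"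
  unfolding X_def by measurable

lemma prob_scaleR_mem_dil:
  assumes "l \<in> {1..n+m}" "0 < c" "0 < x"
  shows "prob {\<omega> \<in> space M. c *\<^sub>R Z l \<omega> \<in> dil x A} = tail (distr M borel (X l)) (x / c)"
proof -
  have "{\<omega> \<in> space M. c *\<^sub>R Z l \<omega> \<in> dil x A} = {\<omega> \<in> space M. x / c < X l \<omega>}"
    using assms by (auto simp: X_def mem_dil_iff_less_supA supA_scaleR field_simps)
  then show ?thesis
    using assms(1) by (simp add: tail_def measure_distr_greaterThan)
qed

lemma tail_X_eq_measure_dil:
  assumes "l \<in> {1..n+m}" "0 < t"
  shows "tail (distr M borel (X l)) t = measure (V l) (dil t A)"
proof -
  have "tail (distr M borel (X l)) t = prob {\<omega> \<in> space M. Z l \<omega> \<in> dil t A}"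
    using prob_scaleR_mem_dil[OF assms(1) _ assms(2), of 1] by simp
  also have "\<dots> = measure (V l) (dil t A)"
    using assms open_dil[OF assms(2)]
    by (subst distr_Z[symmetric]) (auto simp: measure_distr intro!: arg_cong[where f = prob])
  finally show ?thesis .
qed

lemma tail_X_cong_ev:
  "l \<in> {1..n+m} \<Longrightarrow> eventually (\<lambda>t. measure (V l) (dil t A) = tail (distr M borel (X l)) t) at_top"
  using eventually_gt_at_top[of 0] by eventually_elim (simp add: tail_X_eq_measure_dil)

lemma tail_X_bigo:
  assumes "l \<in> {1..n+m}"
  shows "tail (distr M borel (X l)) \<in> O(tail (distr M borel (X 1)))"
proof -
  have "(\<lambda>x. measure (V l) (dil x A)) \<in> O(\<lambda>x. measure (V 1) (dil x A))"
    using assms equiv[of l] landau_o.small_imp_big[OF small[of l]] by (cases "l = 1") force+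
  then show ?thesis
    using assms n_pos by (subst (asm) landau_o.big.cong_ex[OF tail_X_cong_ev tail_X_cong_ev]) auto
qed

lemma tail_X_bigo_rev:
  assumes "l \<in> {1..n}"
  shows "tail (distr M borel (X 1)) \<in> O(tail (distr M borel (X l)))"
proof -
  have "(\<lambda>x. measure (V 1) (dil x A)) \<in> O(\<lambda>x. measure (V l) (dil x A))"
    using assms equiv[of l] by (cases "l = 1") auto
  then show ?thesis
    using assms n_pos by (subst (asm) landau_o.big.cong_ex[OF tail_X_cong_ev tail_X_cong_ev]) auto
qed

lemma tail_X_smallo:
  assumes "l \<in> {n+1..n+m}"
  shows "tail (distr M borel (X l)) \<in> o(tail (distr M borel (X 1)))"
  using small[OF assms] assms n_pos
  by (subst (asm) landau_o.small.cong_ex[OF tail_X_cong_ev tail_X_cong_ev]) auto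

sublocale heavy_light_family M X "n + m" n
proof
  show "indep_vars (\<lambda>_. borel) X {1..n + m}"
    unfolding X_def by (rule indep_vars_compose2[OF indep_Z]) simp
  show "classA (distr M borel (X l))" if "l \<in> {1..n}" for l
  proof -
    have "distr M borel (X l) = distA A (V l)"
      using that by (simp add: distA_def X_def[abs_def] distr_distr comp_def flip: distr_Z)
    then show ?thesis
      using classAA_V[OF that] by (simp add: classAA_def)
  qed
qed (use n_pos supA_nonneg tail_X_bigo tail_X_smallo in \<open>auto simp: X_def\<close>)

definition coeffs :: "(nat \<Rightarrow> real) set" where
  "coeffs = {c. (\<forall>i\<in>{1..n}. 0 < c i \<and> c i \<le> b) \<and>
     (\<forall>j\<in>{n+1..n+m}. 0 \<le> c j \<and> c j \<le> b \<and> (\<exists>i\<in>{1..n}. c j \<le> c i))}"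

definition num :: "(nat \<Rightarrow> real) \<Rightarrow> real \<Rightarrow> real" where
  "num c x = prob {\<omega> \<in> space M. (\<Sum>i=1..n+m. c i *\<^sub>R Z i \<omega>) \<in> dil x A}"

definition den :: "(nat \<Rightarrow> real) \<Rightarrow> real \<Rightarrow> real" where
  "den c x = (\<Sum>i=1..n. prob {\<omega> \<in> space M. c i *\<^sub>R Z i \<omega> \<in> dil x A})"

lemma coeffs_nonneg: "c \<in> coeffs \<Longrightarrow> l \<in> {1..n+m} \<Longrightarrow> 0 \<le> c l"
  by (cases "l \<le> n") (auto simp: coeffs_def less_imp_le)

lemma coeffs_max:
  assumes "c \<in> coeffs"
  obtains i where "i \<in> {1..n}" "\<And>l. l \<in> {1..n+m} \<Longrightarrow> c l \<le> c i"
proof -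
  obtain i where i: "i \<in> {1..n}" "c i = Max (c ` {1..n})"
    using Max_in[of "c ` {1..n}"] n_pos by fastforce
  have "c l \<le> c i" if "l \<in> {1..n+m}" for l
  proof (cases "l \<le> n")
    case True
    then show ?thesis
      using that i by (simp add: Max_ge)
  next
    case False
    with that have "l \<in> {n+1..n+m}"
      by simp
    then obtain j where "j \<in> {1..n}" "c l \<le> c j"
      using assms unfolding coeffs_def by blast
    then show ?thesis
      using i by (simp add: Max_ge order_trans)
  qed
  with i(1) show thesis
    by (rule that)
qed

lemma den_eq:
  assumes "c \<in> coeffs" "0 < x"
  shows "den c x = (\<Sum>i=1..n. G i (x / c i))"
  unfolding den_def using assms by (intro sum.cong refl prob_scaleR_mem_dil) (auto simp: coeffs_def)

lemma den_pos: "c \<in> coeffs \<Longrightarrow> 0 < x \<Longrightarrow> 0 < den c x"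
  using n_pos classA_distr.tail_pos[OF classA_distr.intro[OF heavy]]
  by (auto simp: den_eq intro!: sum_pos)

lemma admissible_rescaled:
  assumes "c \<in> coeffs" "i \<in> {1..n}" "\<And>l. l \<in> {1..n+m} \<Longrightarrow> c l \<le> c i"
  shows "admissible {1..n+m} (\<lambda>l. c l / c i)"
  using assms coeffs_nonneg[OF assms(1)] by (auto simp: admissible_def coeffs_def)

lemma den_eq_heavy_tail_sum:
  assumes "c \<in> coeffs" "0 < x" "i \<in> {1..n}"
  shows "den c x = heavy_tail_sum {1..n+m} (\<lambda>l. c l / c i) (x / c i)"
proof -
  have "{1..n+m} \<inter> {1..n} = {1..n}"
    by auto
  moreover have "0 < c i"
    using assms by (auto simp: coeffs_def)
  ultimately show ?thesis
    using assms by (simp add: den_eq heavy_tail_sum_def)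
qed

lemma num_le_prob_wsum:
  assumes "c \<in> coeffs" "0 < x" "i \<in> {1..n}"
  shows "num c x \<le> prob {\<omega> \<in> space M. x / c i < wsum {1..n+m} (\<lambda>l. c l / c i) \<omega>}"
  unfolding num_def
proof (rule finite_measure_mono)
  have "0 < c i"
    using assms by (auto simp: coeffs_def)
  have "x / c i < wsum {1..n+m} (\<lambda>l. c l / c i) \<omega>"
    if "(\<Sum>l=1..n+m. c l *\<^sub>R Z l \<omega>) \<in> dil x A" for \<omega>
  proof -
    have "x < supA A (\<Sum>l=1..n+m. c l *\<^sub>R Z l \<omega>)"
      using that assms(2) by (simp add: mem_dil_iff_less_supA)
    also have "\<dots> \<le> (\<Sum>l=1..n+m. c l * X l \<omega>)"
      unfolding X_def using coeffs_nonneg[OF assms(1)] by (intro supA_sum_le) auto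
    also have "\<dots> = c i * wsum {1..n+m} (\<lambda>l. c l / c i) \<omega>"
      using \<open>0 < c i\<close> by (simp add: wsum_def sum_distrib_left)
    finally show ?thesis
      using \<open>0 < c i\<close> by (simp add: divide_less_eq mult.commute)
  qed
  then show "{\<omega> \<in> space M. (\<Sum>l=1..n+m. c l *\<^sub>R Z l \<omega>) \<in> dil x A}
      \<subseteq> {\<omega> \<in> space M. x / c i < wsum {1..n+m} (\<lambda>l. c l / c i) \<omega>}"
    by blast
qed measurable

lemma tail_first_le_den:
  obtains K t0 where "0 < K"
    "\<And>c x i. c \<in> coeffs \<Longrightarrow> 0 < x \<Longrightarrow> i \<in> {1..n} \<Longrightarrow> t0 \<le> x / c i \<Longrightarrow> G 1 (x / c i) \<le> K * den c x"
proof -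
  obtain K where "0 < K" and ev: "eventually (\<lambda>t. \<forall>l\<in>{1..n}. norm (G 1 t) \<le> K * norm (G l t)) at_top"
    using bigo_finite_uniform[of "{1..n}" "\<lambda>_. G 1" G] tail_X_bigo_rev by blast
  have "eventually (\<lambda>t. \<forall>l\<in>{1..n}. G 1 t \<le> K * G l t) at_top"
    using ev by eventually_elim (simp add: tail_nonneg)
  then obtain t0 where t0: "\<And>t l. t0 \<le> t \<Longrightarrow> l \<in> {1..n} \<Longrightarrow> G 1 t \<le> K * G l t"
    unfolding eventually_at_top_linorder by blast
  have "G 1 (x / c i) \<le> K * den c x" if "c \<in> coeffs" "0 < x" "i \<in> {1..n}" "t0 \<le> x / c i" for c x i
  proof -
    have "G 1 (x / c i) \<le> K * G i (x / c i)"
      using t0 that by blast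
    also have "G i (x / c i) \<le> den c x"
      using that by (auto simp: den_eq tail_nonneg intro: member_le_sum)
    finally show ?thesis
      using \<open>0 < K\<close> by simp
  qed
  with \<open>0 < K\<close> show thesis
    by (rule that)
qed

lemma num_le_den_eventually:
  assumes "0 < r"
  shows "eventually (\<lambda>x. \<forall>c\<in>coeffs. num c x \<le> (1 + r) * den c x) at_top"
proof -
  obtain K t0 where "0 < K" and tail_first: "\<And>c x i. c \<in> coeffs \<Longrightarrow> 0 < x \<Longrightarrow> i \<in> {1..n} \<Longrightarrow>
      t0 \<le> x / c i \<Longrightarrow> G 1 (x / c i) \<le> K * den c x"
    using tail_first_le_den by blast
  define \<epsilon> where "\<epsilon> = min 1 (r / (1 + K))"
  have "0 < \<epsilon>" "\<epsilon> \<le> r / (1 + K)"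
    using assms \<open>0 < K\<close> by (simp_all add: \<epsilon>_def)
  then have "wsum_tail_bound {1..n+m} \<epsilon>" and "\<epsilon> * (1 + K) \<le> r"
    using \<open>0 < K\<close> by (auto intro: wsum_tail_bound_all simp: le_divide_eq)
  then obtain y0 where y0: "\<And>y w. y0 \<le> y \<Longrightarrow> admissible {1..n+m} w \<Longrightarrow>
      prob {\<omega> \<in> space M. y < wsum {1..n+m} w \<omega>} \<le> (1 + \<epsilon>) * heavy_tail_sum {1..n+m} w y + \<epsilon> * G 1 y"
    unfolding wsum_tail_bound_def eventually_at_top_linorder by blast
  have "num c x \<le> (1 + r) * den c x" if "b * max (max y0 t0) 1 \<le> x" "c \<in> coeffs" for x c
  proof -
    obtain i where i: "i \<in> {1..n}" "\<And>l. l \<in> {1..n+m} \<Longrightarrow> c l \<le> c i"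
      using coeffs_max[OF \<open>c \<in> coeffs\<close>] by blast
    have "max (max y0 t0) 1 \<le> x / b"
      using that(1) b_pos by (simp add: le_divide_eq mult.commute)
    moreover from this have "0 < x"
      using b_pos by (simp add: zero_less_divide_iff)
    moreover have "x / b \<le> x / c i"
      using \<open>0 < x\<close> i(1) \<open>c \<in> coeffs\<close> b_pos by (intro divide_left_mono) (auto simp: coeffs_def)
    ultimately have y: "y0 \<le> x / c i" "t0 \<le> x / c i" and "0 < x"
      by auto
    have "num c x \<le> (1 + \<epsilon>) * den c x + \<epsilon> * G 1 (x / c i)"
      using num_le_prob_wsum[OF \<open>c \<in> coeffs\<close> \<open>0 < x\<close> i(1)]
        y0[OF y(1) admissible_rescaled[OF \<open>c \<in> coeffs\<close> i]] den_eq_heavy_tail_sum[OF \<open>c \<in> coeffs\<close> \<open>0 < x\<close> i(1)]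
      by simp
    also have "\<dots> \<le> (1 + \<epsilon>) * den c x + \<epsilon> * (K * den c x)"
      using tail_first[OF \<open>c \<in> coeffs\<close> \<open>0 < x\<close> i(1) y(2)] \<open>0 < \<epsilon>\<close> by simp
    also have "\<dots> = (1 + \<epsilon> * (1 + K)) * den c x"
      by (simp add: algebra_simps)
    also have "\<dots> \<le> (1 + r) * den c x"
      using \<open>\<epsilon> * (1 + K) \<le> r\<close> den_pos[OF \<open>c \<in> coeffs\<close> \<open>0 < x\<close>] by (intro mult_right_mono) auto
    finally show ?thesis .
  qed
  then show ?thesis
    by (auto simp: eventually_at_top_linorder)
qed

lemma num_event_sets:
  assumes "0 < x"
  shows "{\<omega> \<in> space M. (\<Sum>i=1..n+m. c i *\<^sub>R Z i \<omega>) \<in> dil x A} \<in> events"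
proof -
  have [measurable]: "dil x A \<in> sets borel"
    using open_dil[OF assms] by simp
  show ?thesis
    by measurable
qed

lemma sum_mem_dil_if_single:
  assumes c: "c \<in> coeffs" and "0 < x" and i: "i \<in> {1..n}" and "\<omega> \<in> space M" "x / c i < X i \<omega>"
  shows "(\<Sum>l=1..n+m. c l *\<^sub>R Z l \<omega>) \<in> dil x A"
proof -
  have "0 < c i"
    using c i by (auto simp: coeffs_def)
  then have "c i *\<^sub>R Z i \<omega> \<in> dil x A"
    using assms by (auto simp: X_def mem_dil_iff_less_supA supA_scaleR field_simps)
  moreover have "\<forall>k. 0 \<le> (\<Sum>l\<in>{1..n+m} - {i}. c l *\<^sub>R Z l \<omega>) $ k"
    using coeffs_nonneg[OF c] Z_nonneg[OF _ \<open>\<omega> \<in> space M\<close>] by (auto simp: sum_component intro!: sum_nonneg)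
  moreover have "(\<Sum>l=1..n+m. c l *\<^sub>R Z l \<omega>) = c i *\<^sub>R Z i \<omega> + (\<Sum>l\<in>{1..n+m} - {i}. c l *\<^sub>R Z l \<omega>)"
    using i by (subst sum.remove[of _ i]) auto
  ultimately show ?thesis
    using \<open>0 < x\<close> by (simp add: dil_add_nonneg)
qed

lemma num_ge_Bonferroni:
  assumes "c \<in> coeffs" "0 < x"
  shows "(\<Sum>i=1..n. G i (x / c i) - (\<Sum>k\<in>{1..n} - {i}. G i (x / c i) * G k (x / c k))) \<le> num c x"
proof -
  define E where "E i = X i -` {x / c i<..} \<inter> space M" for i
  have E_sets: "E i \<in> events" if "i \<in> {1..n}" for i
    using that unfolding E_def by (auto intro!: measurable_sets)
  have prob_E: "prob (E i) = G i (x / c i)" if "i \<in> {1..n}" for i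
    using that by (simp add: E_def tail_def measure_distr)
  have prob_EE: "prob (E i \<inter> E k) = G i (x / c i) * G k (x / c k)"
    if "i \<in> {1..n}" "k \<in> {1..n}" "i \<noteq> k" for i k
  proof -
    have "prob (\<Inter>j\<in>{i, k}. X j -` {x / c j<..} \<inter> space M) = (\<Prod>j\<in>{i, k}. prob (X j -` {x / c j<..} \<inter> space M))"
      using that by (intro indep_varsD[OF indep]) auto
    then show ?thesis
      using that prob_E by (simp add: E_def Int_assoc)
  qed
  have "(\<Sum>i=1..n. G i (x / c i) - (\<Sum>k\<in>{1..n} - {i}. G i (x / c i) * G k (x / c k)))
      = (\<Sum>i=1..n. prob (E i) - (\<Sum>k\<in>{1..n} - {i}. prob (E i \<inter> E k)))"
    by (intro sum.cong refl) (simp add: prob_E prob_EE)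
  also have "\<dots> \<le> prob (\<Union>i\<in>{1..n}. E i)"
    by (intro prob_UN_ge_Bonferroni E_sets) auto
  also have "\<dots> \<le> num c x"
    unfolding num_def using sum_mem_dil_if_single[OF assms]
    by (intro finite_measure_mono num_event_sets[OF assms(2)]) (auto simp: E_def)
  finally show ?thesis .
qed

lemma num_ge_den:
  assumes "c \<in> coeffs" "0 < x"
  shows "den c x * (1 - (\<Sum>k=1..n. G k (x / b))) \<le> num c x"
proof -
  have "G i (x / c i) * (1 - (\<Sum>k=1..n. G k (x / b)))
      \<le> G i (x / c i) - (\<Sum>k\<in>{1..n} - {i}. G i (x / c i) * G k (x / c k))" if "i \<in> {1..n}" for i
  proof -
    have "(\<Sum>k\<in>{1..n} - {i}. G k (x / c k)) \<le> (\<Sum>k\<in>{1..n} - {i}. G k (x / b))"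
      using assms b_pos by (intro sum_mono G_mono divide_left_mono) (auto simp: coeffs_def)
    also have "\<dots> \<le> (\<Sum>k=1..n. G k (x / b))"
      by (intro sum_mono2) (auto simp: tail_nonneg)
    finally have "G i (x / c i) * (\<Sum>k\<in>{1..n} - {i}. G k (x / c k)) \<le> G i (x / c i) * (\<Sum>k=1..n. G k (x / b))"
      by (intro mult_left_mono tail_nonneg)
    then show ?thesis
      by (simp add: sum_distrib_left right_diff_distrib)
  qed
  then have "(\<Sum>i=1..n. G i (x / c i) * (1 - (\<Sum>k=1..n. G k (x / b)))) \<le> num c x"
    using num_ge_Bonferroni[OF assms] by (meson order_trans sum_mono)
  then show ?thesis
    using assms by (simp add: den_eq sum_distrib_right)
qed

lemma den_le_num_eventually:
  assumes "0 < r"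
  shows "eventually (\<lambda>x. \<forall>c\<in>coeffs. (1 - r) * den c x \<le> num c x) at_top"
proof -
  have "filterlim (\<lambda>x. 1 / b * x) at_top at_top"
    using b_pos by (intro filterlim_tendsto_pos_mult_at_top[OF tendsto_const _ filterlim_ident]) simp
  then have "((\<lambda>x. G k (x / b)) \<longlongrightarrow> 0) at_top" if "k \<in> {1..n}" for k
    using filterlim_compose[OF classA_distr.tail_tendsto_0[OF classA_distr.intro[OF heavy[OF that]]]]
    by (simp add: comp_def)
  then have "((\<lambda>x. \<Sum>k=1..n. G k (x / b)) \<longlongrightarrow> 0) at_top"
    by (rule tendsto_null_sum)
  then have "eventually (\<lambda>x. (\<Sum>k=1..n. G k (x / b)) < r) at_top"
    using assms by (rule order_tendstoD)
  then show ?thesis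
    using eventually_gt_at_top[of 0]
  proof eventually_elim
    case (elim x)
    have "(1 - r) * den c x \<le> num c x" if "c \<in> coeffs" for c
    proof -
      have "(1 - r) * den c x \<le> den c x * (1 - (\<Sum>k=1..n. G k (x / b)))"
        using elim(1) den_pos[OF that elim(2)] by (simp add: mult.commute mult_left_mono)
      also have "\<dots> \<le> num c x"
        using that elim(2) by (rule num_ge_den)
      finally show ?thesis .
    qed
    then show ?case
      by blast
  qed
qed

lemma ratio_close_eventually:
  assumes "0 < r"
  shows "eventually (\<lambda>x. \<forall>c\<in>coeffs. \<bar>num c x / den c x - 1\<bar> \<le> r) at_top"
  using num_le_den_eventually[OF assms] den_le_num_eventually[OF assms] eventually_gt_at_top[of 0]
proof eventually_elim
  case (elim x)
  have "\<bar>num c x / den c x - 1\<bar> \<le> r" if "c \<in> coeffs" for c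
    using elim(1,2) that den_pos[OF that elim(3)] by (auto simp: abs_le_iff field_simps)
  then show ?case
    by blast
qed

end

theorem lemma4p6:
  fixes A :: "(real ^ 'd) set"
    and M :: "'w measure"
    and Z :: "nat \<Rightarrow> 'w \<Rightarrow> real ^ 'd"
    and V :: "nat \<Rightarrow> (real ^ 'd) measure"
    and n m :: nat and b :: real
  assumes A: "classR A"
    and P: "prob_space M"
    and n: "1 \<le> n"
    and indep: "prob_space.indep_vars M (\<lambda>_. borel) Z {1..n+m}"
    and nonneg: "\<And>i \<omega> k. i \<in> {1..n+m} \<Longrightarrow> \<omega> \<in> space M \<Longrightarrow> 0 \<le> Z i \<omega> $ k"
    and distr: "\<And>i. i \<in> {1..n+m} \<Longrightarrow> distr M borel (Z i) = V i"
    and inA: "\<And>i. i \<in> {1..n} \<Longrightarrow> classAA A (V i)"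
    and equiv: "\<And>i. i \<in> {2..n} \<Longrightarrow>
        (\<lambda>x. measure (V i) (dil x A)) \<in> O(\<lambda>x. measure (V 1) (dil x A)) \<and>
        (\<lambda>x. measure (V 1) (dil x A)) \<in> O(\<lambda>x. measure (V i) (dil x A))"
    and small: "\<And>j. j \<in> {n+1..n+m} \<Longrightarrow>
        (\<lambda>x. measure (V j) (dil x A)) \<in> o(\<lambda>x. measure (V 1) (dil x A))"
    and b: "0 < b"
  shows "((\<lambda>x. SUP c \<in> {c :: nat \<Rightarrow> real.
              (\<forall>i\<in>{1..n}. 0 < c i \<and> c i \<le> b) \<and>
              (\<forall>j\<in>{n+1..n+m}. 0 \<le> c j \<and> c j \<le> b \<and> (\<exists>i\<in>{1..n}. c j \<le> c i))}.
            ereal \<bar>measure M {\<omega> \<in> space M. (\<Sum>i=1..n+m. c i *\<^sub>R Z i \<omega>) \<in> dil x A}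
                   / (\<Sum>i=1..n. measure M {\<omega> \<in> space M. c i *\<^sub>R Z i \<omega> \<in> dil x A}) - 1\<bar>)
          \<longlongrightarrow> 0) at_top"
proof -
  interpret heavy_light_vectors M A Z V n m b
    using assms by (intro heavy_light_vectors.intro classR_set.intro heavy_light_vectors_axioms.intro) auto
  have "(\<lambda>_. b) \<in> coeffs"
    using b n by (auto simp: coeffs_def)
  then have "coeffs \<noteq> {}"
    by blast
  from tendsto_SUP_ereal_0[OF this ratio_close_eventually]
  show ?thesis
    unfolding coeffs_def num_def den_def .
qed

end
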